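(* Let $\mathbf{L}\in Q^2(\mathbb{D}^2)$ and let $F\colon\mathbb{D}^2\to\mathbb{C}$ be analytic. (i) If $F$ has bounded $\mathbf{L}$-index in joint variables, then for every $R\in(0,\beta]^2$ there exist $n_0\in\mathbb{Z}_+$ and $p\ge1$ such that for every $z^0\in\mathbb{D}^2$ there exists $(k_1^0,k_2^0)\in\mathbb{Z}_+^2$ with $k_1^0+k_2^0\le n_0$ and $$\max\Big\{|F^{(k_1^0,k_2^0)}(z)|: z\in\mathbb{D}^2\Big[z^0,\frac{R}{\mathbf{L}(z^0)}\Big]\Big\}\le p\,|F^{(k_1^0,k_2^0)}(z^0)|.$$ (ii) If for every $R\in(0,\beta]^2$ there exist $n_0\in\mathbb{Z}_+$ and $p\ge1$ such that for every $z^0\in\mathbb{D}^2$ there exist $k_1^0\le n_0$ and $k_2^0\le n_0$ with $$\max\Big\{|F^{(k_1^0,0)}(z)|: z\in\mathbb{D}^2\Big[z^0,\frac{R}{\mathbf{L}(z^0)}\Big]\Big\}\le p\,|F^{(k_1^0,0)}(z^0)|,\qquad \max\Big\{|F^{(0,k_2^0)}(z)|: z\in\mathbb{D}^2\Big[z^0,\frac{R}{\mathbf{L}(z^0)}\Big]\Big\}\le p\,|F^{(0,k_2^0)}(z^0)|,$$ then $F$ has bounded $\mathbf{L}$-index in joint variables.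
   Context: $\mathbb{D}^2=\{(z_1,z_2)\in\mathbb{C}^2:|z_1|<1,|z_2|<1\}$, $\mathbb{Z}_+=\{0,1,2,\dots\}$, $\mathbb{R}_+=[0,\infty)$. A constant $\beta>1$ is fixed. $\mathbf{L}(z)=(l_1(z),l_2(z))$, where each $l_j\colon\mathbb{D}^2\to\mathbb{R}_+$ is continuous and satisfies $l_j(z_1,z_2)>\beta/(1-|z_j|)$ for all $(z_1,z_2)\in\mathbb{D}^2$, $j=1,2$. For $z^0\in\mathbb{C}^2$ and $R=(r_1,r_2)\in\mathbb{R}_+^2$: $\mathbb{D}^2[z^0,R]=\{z:|z_j-z_j^0|\le r_j,\ j=1,2\}$ and $\frac{R}{\mathbf{L}(z^0)}=\big(\frac{r_1}{l_1(z^0)},\frac{r_2}{l_2(z^0)}\big)$. $F^{(p,q)}=\frac{\partial^{p+q}F}{\partial z_1^p\partial z_2^q}$. An analytic $F\colon\mathbb{D}^2\to\mathbb{C}$ has bounded $\mathbf{L}$-index in joint variables if there is $n_0\in\mathbb{Z}_+$ such that for all $z\in\mathbb{D}^2$ and all $(p_1,p_2)\in\mathbb{Z}_+^2$: $\frac{|F^{(p_1,p_2)}(z)|}{p_1!p_2!\,l_1^{p_1}(z)l_2^{p_2}(z)}\le\max\{\frac{|F^{(k_1,k_2)}(z)|}{k_1!k_2!\,l_1^{k_1}(z)l_2^{k_2}(z)}:0\le k_1+k_2\le n_0\}$. $Q^2(\mathbb{D}^2)$ is the class of such $\mathbf{L}$ for which, for all $R=(r_1,r_2)\in[0,\beta]^2$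 and $j=1,2$, $0<\lambda_{1,j}(R)\le\lambda_{2,j}(R)<\infty$, where $\lambda_{1,j}(R)=\inf_{z^0\in\mathbb{D}^2}\inf\{l_j(z)/l_j(z^0): z\in\mathbb{D}^2[z^0,R/\mathbf{L}(z^0)]\}$ and $\lambda_{2,j}(R)=\sup_{z^0\in\mathbb{D}^2}\sup\{l_j(z)/l_j(z^0): z\in\mathbb{D}^2[z^0,R/\mathbf{L}(z^0)]\}$. *)

theory Defs
  imports "HOL-Analysis.Analysis"
begin

definition D2 :: "(complex \<times> complex) set" where
  "D2 = {z. cmod (fst z) < 1 \<and> cmod (snd z) < 1}"

definition pdisc :: "complex \<times> complex \<Rightarrow> real \<Rightarrow> real \<Rightarrow> (complex \<times> complex) set" where
  "pdisc z0 r1 r2 = {z. cmod (fst z - fst z0) \<le> r1 \<and> cmod (snd z - snd z0) \<le> r2}"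

definition analytic_D2 :: "(complex \<times> complex \<Rightarrow> complex) \<Rightarrow> bool" where
  "analytic_D2 F \<longleftrightarrow>
     (\<forall>z\<in>D2. \<exists>c1 c2. (F has_derivative (\<lambda>h. c1 * fst h + c2 * snd h)) (at z))"

definition pderiv2 :: "(complex \<times> complex \<Rightarrow> complex) \<Rightarrow> nat \<Rightarrow> nat \<Rightarrow> complex \<times> complex \<Rightarrow> complex" where
  "pderiv2 F p q z =
     (deriv ^^ p) (\<lambda>w1. (deriv ^^ q) (\<lambda>w2. F (w1, w2)) (snd z)) (fst z)"

definition ndrv :: "(complex \<times> complex \<Rightarrow> complex) \<Rightarrow> (complex \<times> complex \<Rightarrow> real)
     \<Rightarrow> (complex \<times> complex \<Rightarrow> real) \<Rightarrow> nat \<Rightarrow> nat \<Rightarrow> complex \<times> complex \<Rightarrow> real" where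
  "ndrv F l1 l2 p q z =
     cmod (pderiv2 F p q z) / (fact p * fact q * l1 z ^ p * l2 z ^ q)"

definition bounded_L_index_joint :: "(complex \<times> complex \<Rightarrow> complex) \<Rightarrow> (complex \<times> complex \<Rightarrow> real)
     \<Rightarrow> (complex \<times> complex \<Rightarrow> real) \<Rightarrow> bool" where
  "bounded_L_index_joint F l1 l2 \<longleftrightarrow>
     (\<exists>n0::nat. \<forall>z\<in>D2. \<forall>p1 p2::nat.
        ndrv F l1 l2 p1 p2 z \<le> Max {ndrv F l1 l2 k1 k2 z | k1 k2. k1 + k2 \<le> n0})"

text \<open>The set of ratios l(z)/l(z0), z in D2[z0, R/L(z0)]; lambda_1 is its Inf, lambda_2 its Sup.\<close>
definition ratio_set :: "(complex \<times> complex \<Rightarrow> real) \<Rightarrow> (complex \<times> complex \<Rightarrow> real)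
     \<Rightarrow> (complex \<times> complex \<Rightarrow> real) \<Rightarrow> real \<Rightarrow> real \<Rightarrow> real set" where
  "ratio_set l1 l2 l r1 r2 =
     {l z / l z0 | z0 z. z0 \<in> D2 \<and> z \<in> D2 \<and> z \<in> pdisc z0 (r1 / l1 z0) (r2 / l2 z0)}"

text \<open>Class Q^2(D2): for all R in [0,beta]^2, 0 < lambda_1 and lambda_2 < infinity
  (lambda_1 \<le> lambda_2 is automatic since the set is nonempty).\<close>
definition Q2 :: "real \<Rightarrow> (complex \<times> complex \<Rightarrow> real) \<Rightarrow> (complex \<times> complex \<Rightarrow> real) \<Rightarrow> bool" where
  "Q2 \<beta> l1 l2 \<longleftrightarrow>
     (\<forall>r1 r2. 0 \<le> r1 \<and> r1 \<le> \<beta> \<and> 0 \<le> r2 \<and> r2 \<le> \<beta> \<longrightarrow>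
        (\<forall>l\<in>{l1, l2}. 0 < Inf (ratio_set l1 l2 l r1 r2) \<and> bdd_above (ratio_set l1 l2 l r1 r2)))"

end

theory Submission
  imports Defs "HOL-Complex_Analysis.Complex_Analysis"
begin

text \<open>
  (i) Let F have bounded \<open>L\<close>-index N. Normalise the derivatives of order at most N by the
  weights L(z0), frozen at the centre z0. At any point z' of the polydisc D2[z0, \<beta>/L(z0)] the
  index bounds all normalised derivatives by those of order at most N, and the Q2 condition makes
  L(z') comparable with L(z0). A Taylor expansion in one variable therefore propagates a bound for
  the frozen normalised derivatives of order at most N, at the cost of a fixed factor, over a step
  of length \<beta>/(q L_j(z0)) in one coordinate. After 2q steps the polydisc is covered, and the
  derivative that is maximal at z0 dominates on all of it.

  (ii) Conversely, Cauchy's inequality on D2[z0, \<beta>/L(z0)] bounds the normalised derivatives of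
  orders (k1+i, j) and (i, k2+j) at z0 by p \<beta>^-(i+j) times those of orders (k1, 0) and (0, k2).
  Choosing \<beta>^N > p, every normalised derivative of large order is dominated by one of total
  order at most 2 n0 + N.
\<close>

section \<open>Separately holomorphic functions on the bidisc\<close>

lemma analytic_D2_continuous_on:
  assumes "analytic_D2 F" "S \<subseteq> D2"
  shows "continuous_on S F"
proof -
  have "continuous_on D2 F"
    using assms(1) unfolding analytic_D2_def
    by (meson continuous_at_imp_continuous_on has_derivative_continuous)
  then show ?thesis
    using assms(2) continuous_on_subset by blast
qed

lemma analytic_D2_holomorphic_fst:
  assumes "analytic_D2 F" "cmod w2 < 1"
  shows "(\<lambda>w1. F (w1, w2)) holomorphic_on ball 0 1"
proof (subst holomorphic_on_open, simp, intro ballI)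
  fix w1 :: complex assume "w1 \<in> ball 0 1"
  then have "(w1, w2) \<in> D2" using assms by (simp add: D2_def)
  then obtain c1 c2 where d: "(F has_derivative (\<lambda>h. c1 * fst h + c2 * snd h)) (at (w1, w2))"
    using assms unfolding analytic_D2_def by blast
  have "((\<lambda>w. (w, w2)) has_derivative (\<lambda>h. (h, 0))) (at w1)"
    by (auto intro!: derivative_eq_intros)
  from has_derivative_compose[OF this d]
  have "((\<lambda>w. F (w, w2)) has_derivative (\<lambda>h. c1 * h)) (at w1)"
    by (rule has_derivative_eq_rhs) auto
  then show "\<exists>f'. ((\<lambda>w1. F (w1, w2)) has_field_derivative f') (at w1)"
    unfolding has_field_derivative_def by blast
qed

lemma analytic_D2_swap:
  assumes "analytic_D2 F"
  shows "analytic_D2 (F \<circ> prod.swap)"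
  unfolding analytic_D2_def
proof
  fix z :: "complex \<times> complex" assume "z \<in> D2"
  then have "prod.swap z \<in> D2" by (simp add: D2_def)
  then obtain c1 c2 where d: "(F has_derivative (\<lambda>h. c1 * fst h + c2 * snd h)) (at (prod.swap z))"
    using assms unfolding analytic_D2_def by blast
  have "(prod.swap has_derivative prod.swap) (at z)"
    unfolding prod.swap_def by (auto intro!: derivative_eq_intros)
  from has_derivative_compose[OF this d]
  have "(F \<circ> prod.swap has_derivative (\<lambda>h. c2 * fst h + c1 * snd h)) (at z)"
    unfolding o_def by (rule has_derivative_eq_rhs) (auto simp: add.commute)
  then show "\<exists>c1 c2. (F \<circ> prod.swap has_derivative (\<lambda>h. c1 * fst h + c2 * snd h)) (at z)"
    by blast
qed

lemma analytic_D2_holomorphic_snd: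
  assumes "analytic_D2 F" "cmod w1 < 1"
  shows "(\<lambda>w2. F (w1, w2)) holomorphic_on ball 0 1"
  using analytic_D2_holomorphic_fst[OF analytic_D2_swap[OF assms(1)] assms(2)] by simp

section \<open>Contour integrals depending on a parameter\<close>

lemma continuous_on_contour_integral_circlepath_param:
  fixes H :: "'a::topological_space \<Rightarrow> complex \<Rightarrow> complex"
  assumes cont: "continuous_on (U \<times> sphere c r) (\<lambda>(w, u). H w u)" and r: "0 \<le> r"
  shows "continuous_on U (\<lambda>w. contour_integral (circlepath c r) (H w))"
proof -
  have eq: "contour_integral (circlepath c r) (H w) =
      integral (cbox 0 1) (\<lambda>t. H w (circlepath c r t) * (2 * pi * \<i> * r * exp (2 * of_real pi * \<i> * t)))" for w
    by (simp add: contour_integral_integral vector_derivative_circlepath cbox_interval)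
  have "continuous_on (U \<times> cbox 0 1) (\<lambda>x. (fst x, circlepath c r (snd x)))"
    unfolding circlepath by (intro continuous_intros)
  moreover have "(\<lambda>x. (fst x, circlepath c r (snd x))) ` (U \<times> cbox 0 1) \<subseteq> U \<times> sphere c r"
    using r by (auto simp: circlepath dist_norm norm_mult)
  ultimately have "continuous_on (U \<times> cbox 0 1) (\<lambda>x. H (fst x) (circlepath c r (snd x)))"
    using continuous_on_compose2[OF cont] by fastforce
  then have "continuous_on (U \<times> cbox 0 1)
      (\<lambda>(w, t). H w (circlepath c r t) * (2 * pi * \<i> * r * exp (2 * of_real pi * \<i> * t)))"
    unfolding case_prod_beta by (intro continuous_intros)
  then show ?thesis
    unfolding eq by (rule integral_continuous_on_param)
qed

lemma contour_integrable_circlepath_param: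
  assumes cont: "continuous_on (U \<times> sphere c r) (\<lambda>(w, u). H w u)" and r: "0 \<le> r" and w: "w \<in> U"
  shows "H w contour_integrable_on circlepath c r"
proof (rule contour_integrable_continuous_circlepath)
  have "continuous_on (sphere c r) (\<lambda>u. (\<lambda>(w, u). H w u) (w, u))"
    by (rule continuous_on_compose2[OF cont continuous_on_Pair[OF continuous_on_const continuous_on_id]])
      (use w in auto)
  then show "continuous_on (path_image (circlepath c r)) (H w)"
    using r by simp
qed

lemma contour_integral_circlepath_swap:
  assumes "continuous_on (sphere a \<rho> \<times> sphere c r) (\<lambda>(\<xi>, u). K \<xi> u)" "0 \<le> \<rho>" "0 \<le> r"
  shows "contour_integral (circlepath a \<rho>) (\<lambda>\<xi>. contour_integral (circlepath c r) (K \<xi>))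
       = contour_integral (circlepath c r) (\<lambda>u. contour_integral (circlepath a \<rho>) (\<lambda>\<xi>. K \<xi> u))"
proof (rule contour_integral_swap)
  show "continuous_on (path_image (circlepath a \<rho>) \<times> path_image (circlepath c r)) (\<lambda>(\<xi>, u). K \<xi> u)"
    using assms by simp
qed (simp_all add: vector_derivative_circlepath, (intro continuous_intros)+)

lemma Cauchy_integral_circlepath_subdisc:
  assumes f: "f holomorphic_on ball a R" and \<rho>: "cball a \<rho> \<subseteq> ball a R" and v: "v \<in> ball a \<rho>"
  shows "contour_integral (circlepath a \<rho>) (\<lambda>\<xi>. f \<xi> / (\<xi> - v)) = 2 * pi * \<i> * f v"
proof -
  have "((\<lambda>\<xi>. f \<xi> / (\<xi> - v)) has_contour_integral (2 * of_real pi * \<i> * f v)) (circlepath a \<rho>)"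
  proof (rule Cauchy_integral_circlepath)
    show "continuous_on (cball a \<rho>) f"
      using holomorphic_on_imp_continuous_on holomorphic_on_subset[OF f \<rho>] by blast
    show "f holomorphic_on ball a \<rho>"
      using holomorphic_on_subset[OF f] \<rho> ball_subset_cball by blast
  qed (use v in \<open>simp add: dist_norm norm_minus_commute\<close>)
  then show ?thesis
    using contour_integral_unique by simp
qed

lemma contour_integrable_circlepath_param_div:
  assumes cont: "continuous_on (ball a R \<times> sphere c r) (\<lambda>(w, u). H w u)" and r: "0 < r"
    and \<rho>: "0 < \<rho>" "cball a \<rho> \<subseteq> ball a R" and v: "v \<in> ball a \<rho>"
  shows "(\<lambda>\<xi>. contour_integral (circlepath c r) (H \<xi>) / (\<xi> - v)) contour_integrable_on circlepath a \<rho>"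
proof (rule contour_integrable_continuous_circlepath)
  have "continuous_on (sphere a \<rho>) (\<lambda>w. contour_integral (circlepath c r) (H w))"
    by (rule continuous_on_subset[OF continuous_on_contour_integral_circlepath_param[OF cont]])
      (use r \<rho> in auto)
  moreover have "\<xi> - v \<noteq> 0" if "\<xi> \<in> sphere a \<rho>" for \<xi>
    using that v by auto
  ultimately have "continuous_on (sphere a \<rho>) (\<lambda>\<xi>. contour_integral (circlepath c r) (H \<xi>) / (\<xi> - v))"
    by (intro continuous_on_divide continuous_intros) auto
  then show "continuous_on (path_image (circlepath a \<rho>)) (\<lambda>\<xi>. contour_integral (circlepath c r) (H \<xi>) / (\<xi> - v))"
    using \<rho>(1) by simp
qed

lemma Cauchy_integral_circlepath_param:
  fixes H :: "complex \<Rightarrow> complex \<Rightarrow> complex"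
  assumes cont: "continuous_on (ball a R \<times> sphere c r) (\<lambda>(w, u). H w u)" and r: "0 < r"
    and hol: "\<And>u. u \<in> sphere c r \<Longrightarrow> (\<lambda>w. H w u) holomorphic_on ball a R"
    and \<rho>: "0 < \<rho>" "cball a \<rho> \<subseteq> ball a R" and v: "v \<in> ball a \<rho>"
  shows "((\<lambda>\<xi>. contour_integral (circlepath c r) (H \<xi>) / (\<xi> - v))
           has_contour_integral (2 * pi * \<i> * contour_integral (circlepath c r) (H v))) (circlepath a \<rho>)"
proof -
  define G where "G = (\<lambda>w. contour_integral (circlepath c r) (H w))"
  define K where "K = (\<lambda>\<xi> u. H \<xi> u / (\<xi> - v))"
  have v_off: "\<xi> - v \<noteq> 0" if "\<xi> \<in> sphere a \<rho>" for \<xi>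
    using that v by auto
  have Kc: "continuous_on (sphere a \<rho> \<times> sphere c r) (\<lambda>(\<xi>, u). K \<xi> u)"
  proof -
    have "continuous_on (sphere a \<rho> \<times> sphere c r) (\<lambda>(w, u). H w u)"
      by (rule continuous_on_subset[OF cont]) (use \<rho> in auto)
    then show ?thesis
      unfolding K_def case_prod_beta
      by (intro continuous_on_divide continuous_intros) (use v_off in auto)
  qed
  have "contour_integral (circlepath a \<rho>) (\<lambda>\<xi>. G \<xi> / (\<xi> - v))
      = contour_integral (circlepath a \<rho>) (\<lambda>\<xi>. contour_integral (circlepath c r) (K \<xi>))"
  proof (rule contour_integral_eq)
    fix \<xi> assume "\<xi> \<in> path_image (circlepath a \<rho>)"
    then have \<xi>: "\<xi> \<in> ball a R" using \<rho> by auto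
    show "G \<xi> / (\<xi> - v) = contour_integral (circlepath c r) (K \<xi>)"
      unfolding K_def G_def
      by (rule contour_integral_div[OF contour_integrable_circlepath_param[OF cont _ \<xi>], symmetric])
        (use r in simp)
  qed
  also have "\<dots> = contour_integral (circlepath c r) (\<lambda>u. contour_integral (circlepath a \<rho>) (\<lambda>\<xi>. K \<xi> u))"
    by (rule contour_integral_circlepath_swap[OF Kc]) (use \<rho>(1) r in auto)
  also have "\<dots> = contour_integral (circlepath c r) (\<lambda>u. 2 * pi * \<i> * H v u)"
  proof (rule contour_integral_eq)
    fix u assume "u \<in> path_image (circlepath c r)"
    then show "contour_integral (circlepath a \<rho>) (\<lambda>\<xi>. K \<xi> u) = 2 * pi * \<i> * H v u"
      unfolding K_def using Cauchy_integral_circlepath_subdisc[OF hol \<rho>(2) v] r by simp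
  qed
  also have "\<dots> = 2 * pi * \<i> * G v"
  proof -
    have v': "v \<in> ball a R" using v \<rho>(2) ball_subset_cball[of a \<rho>] by blast
    show ?thesis
      unfolding G_def
      by (rule contour_integral_lmul[OF contour_integrable_circlepath_param[OF cont _ v']]) (use r in simp)
  qed
  finally have "contour_integral (circlepath a \<rho>) (\<lambda>\<xi>. G \<xi> / (\<xi> - v)) = 2 * pi * \<i> * G v" .
  moreover have "(\<lambda>\<xi>. G \<xi> / (\<xi> - v)) contour_integrable_on circlepath a \<rho>"
    unfolding G_def by (rule contour_integrable_circlepath_param_div[OF cont r \<rho> v])
  ultimately show ?thesis
    unfolding G_def using has_contour_integral_integral by metis
qed

lemma holomorphic_on_contour_integral_circlepath_param:
  fixes H :: "complex \<Rightarrow> complex \<Rightarrow> complex"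
  assumes cont: "continuous_on (ball a R \<times> sphere c r) (\<lambda>(w, u). H w u)" and r: "0 < r"
    and hol: "\<And>u. u \<in> sphere c r \<Longrightarrow> (\<lambda>w. H w u) holomorphic_on ball a R"
  shows "(\<lambda>w. contour_integral (circlepath c r) (H w)) holomorphic_on ball a R"
proof -
  define G where "G = (\<lambda>w. contour_integral (circlepath c r) (H w))"
  have "G field_differentiable at w" if w: "w \<in> ball a R" for w
  proof -
    define \<rho> where "\<rho> = (dist a w + R) / 2"
    have \<rho>: "dist a w < \<rho>" "\<rho> < R"
      using w by (auto simp: \<rho>_def)
    have \<rho>_pos: "0 < \<rho>"
      using \<rho>(1) zero_le_dist[of a w] by linarith
    have \<rho>_sub: "cball a \<rho> \<subseteq> ball a R"
      using \<rho>(2) by auto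
    have G_cont: "continuous_on (sphere a \<rho>) G"
      unfolding G_def
      by (rule continuous_on_subset[OF continuous_on_contour_integral_circlepath_param[OF cont]])
        (use r \<rho>_sub in auto)
    have rep: "((\<lambda>\<xi>. G \<xi> / (\<xi> - v) ^ 1) has_contour_integral (2 * pi * \<i> * G v)) (circlepath a \<rho>)"
      if "v \<in> ball a \<rho>" for v
      unfolding G_def power_one_right
      by (rule Cauchy_integral_circlepath_param[OF cont r hol \<rho>_pos \<rho>_sub that])
    have "(\<lambda>v. 2 * pi * \<i> * G v) field_differentiable at w"
      unfolding field_differentiable_def
      by (rule exI, rule Cauchy_next_derivative_circlepath(2)[where f=G and k=1, OF _ rep])
        (use G_cont \<rho> \<rho>_pos in \<open>auto simp: dist_commute\<close>)
    then have "(\<lambda>v. (2 * pi * \<i>) * G v / (2 * pi * \<i>)) field_differentiable at w"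
      by (intro field_differentiable_divide field_differentiable_const) auto
    then show ?thesis by simp
  qed
  then show ?thesis
    unfolding G_def[symmetric] by (simp add: holomorphic_on_open field_differentiable_def[symmetric])
qed

section \<open>Iterated Cauchy formula\<close>

lemma pderiv2_0_right: "pderiv2 F p 0 (w1, w2) = (deriv ^^ p) (\<lambda>w. F (w, w2)) w1"
  by (simp add: pderiv2_def)

lemma pderiv2_0_left: "pderiv2 F 0 q (w1, w2) = (deriv ^^ q) (\<lambda>w. F (w1, w)) w2"
  by (simp add: pderiv2_def)

lemma pderiv2_eq_higher_deriv_fst: "pderiv2 F p q (w1, w2) = (deriv ^^ p) (\<lambda>w. pderiv2 F 0 q (w, w2)) w1"
  by (simp add: pderiv2_def)

lemma pderiv2_0_left_Cauchy:
  assumes an: "analytic_D2 F" and w1: "cmod w1 < 1" and w2: "cmod w2 < r" and r: "r < 1"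
  shows "(\<lambda>u. F (w1, u) / (u - w2) ^ Suc q) contour_integrable_on circlepath 0 r"
    and "pderiv2 F 0 q (w1, w2)
           = fact q / (2 * pi * \<i>) * contour_integral (circlepath 0 r) (\<lambda>u. F (w1, u) / (u - w2) ^ Suc q)"
proof -
  have h: "(\<lambda>u. F (w1, u)) holomorphic_on ball 0 1" by (rule analytic_D2_holomorphic_snd[OF an w1])
  have cb: "cball 0 r \<subseteq> ball (0::complex) 1" using r by auto
  have c: "continuous_on (cball 0 r) (\<lambda>u. F (w1, u))"
    using holomorphic_on_imp_continuous_on[OF holomorphic_on_subset[OF h cb]] .
  have hb: "(\<lambda>u. F (w1, u)) holomorphic_on ball 0 r"
    using holomorphic_on_subset[OF h] cb ball_subset_cball by blast
  have w: "w2 \<in> ball 0 r" using w2 by simp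
  show "(\<lambda>u. F (w1, u) / (u - w2) ^ Suc q) contour_integrable_on circlepath 0 r"
    by (rule Cauchy_higher_derivative_integral_circlepath(1)[OF c hb w])
  show "pderiv2 F 0 q (w1, w2)
          = fact q / (2 * pi * \<i>) * contour_integral (circlepath 0 r) (\<lambda>u. F (w1, u) / (u - w2) ^ Suc q)"
    unfolding pderiv2_0_left by (rule Cauchy_higher_derivative_integral_circlepath(2)[OF c hb w])
qed

lemma holomorphic_on_pderiv2_0_left:
  assumes an: "analytic_D2 F" and w2: "cmod w2 < 1"
  shows "(\<lambda>w. pderiv2 F 0 q (w, w2)) holomorphic_on ball 0 1"
proof -
  define r where "r = (1 + cmod w2) / 2"
  have r: "cmod w2 < r" "r < 1" "0 < r" using w2 by (auto simp: r_def add_pos_nonneg)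
  define H where "H = (\<lambda>w u. F (w, u) / (u - w2) ^ Suc q)"
  have "(\<lambda>w. contour_integral (circlepath 0 r) (H w)) holomorphic_on ball 0 1"
  proof (rule holomorphic_on_contour_integral_circlepath_param[OF _ r(3)])
    have Fc: "continuous_on (ball 0 1 \<times> sphere 0 r) F"
      by (rule analytic_D2_continuous_on[OF an]) (use r in \<open>auto simp: D2_def\<close>)
    show "continuous_on (ball 0 1 \<times> sphere 0 r) (\<lambda>(w, u). H w u)"
      unfolding H_def case_prod_beta prod.collapse
      by (intro continuous_on_divide Fc continuous_intros) (use r in auto)
    fix u :: complex assume "u \<in> sphere 0 r"
    then have u: "cmod u < 1" "u - w2 \<noteq> 0" using r by auto
    show "(\<lambda>w. H w u) holomorphic_on ball 0 1"
      unfolding H_def using analytic_D2_holomorphic_fst[OF an u(1)] u(2) by (auto intro!: holomorphic_intros)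
  qed
  then have "(\<lambda>w. fact q / (2 * pi * \<i>) * contour_integral (circlepath 0 r) (H w)) holomorphic_on ball 0 1"
    by (auto intro!: holomorphic_intros)
  then show ?thesis
    by (rule holomorphic_transform) (use pderiv2_0_left_Cauchy(2)[OF an _ r(1,2)] in \<open>auto simp: H_def\<close>)
qed

lemma continuous_on_Cauchy_kernel2:
  assumes an: "analytic_D2 F" and "cmod z1 < r1" "r1 < 1" "cmod z2 < r2" "r2 < 1"
  shows "continuous_on (sphere 0 r1 \<times> sphere 0 r2)
           (\<lambda>(\<xi>, u). F (\<xi>, u) / ((\<xi> - z1) ^ Suc p * (u - z2) ^ Suc q))"
proof -
  have Fc: "continuous_on (sphere 0 r1 \<times> sphere 0 r2) F"
    by (rule analytic_D2_continuous_on[OF an]) (use assms in \<open>auto simp: D2_def\<close>)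
  show ?thesis
    unfolding case_prod_beta prod.collapse
    by (intro continuous_on_divide Fc continuous_intros) (use assms in auto)
qed

lemma pderiv2_double_Cauchy:
  assumes an: "analytic_D2 F" and z1: "cmod z1 < r1" "r1 < 1" and z2: "cmod z2 < r2" "r2 < 1"
  shows "pderiv2 F p q (z1, z2) = (fact p * fact q / (2 * pi * \<i>)\<^sup>2) *
     contour_integral (circlepath 0 r1) (\<lambda>\<xi>. contour_integral (circlepath 0 r2)
        (\<lambda>u. F (\<xi>, u) / ((\<xi> - z1) ^ Suc p * (u - z2) ^ Suc q)))"
proof -
  define G where "G = (\<lambda>w. pderiv2 F 0 q (w, z2))"
  define K where "K = (\<lambda>\<xi> u. F (\<xi>, u) / ((\<xi> - z1) ^ Suc p * (u - z2) ^ Suc q))"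
  have h: "G holomorphic_on ball 0 1"
    unfolding G_def by (rule holomorphic_on_pderiv2_0_left[OF an]) (use z2 in linarith)
  have cb: "cball 0 r1 \<subseteq> ball (0::complex) 1" using z1 by auto
  have c: "continuous_on (cball 0 r1) G"
    using holomorphic_on_imp_continuous_on[OF holomorphic_on_subset[OF h cb]] .
  have hb: "G holomorphic_on ball 0 r1"
    using holomorphic_on_subset[OF h] cb ball_subset_cball by blast
  have w: "z1 \<in> ball 0 r1" using z1 by simp
  have r: "0 < r1" "0 < r2" using z1 z2 norm_ge_zero[of z1] norm_ge_zero[of z2] by linarith+
  have "pderiv2 F p q (z1, z2) = (deriv ^^ p) G z1"
    unfolding G_def by (rule pderiv2_eq_higher_deriv_fst)
  also have "\<dots> = fact p / (2 * pi * \<i>) * contour_integral (circlepath 0 r1) (\<lambda>\<xi>. G \<xi> / (\<xi> - z1) ^ Suc p)"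
    by (rule Cauchy_higher_derivative_integral_circlepath(2)[OF c hb w])
  also have "contour_integral (circlepath 0 r1) (\<lambda>\<xi>. G \<xi> / (\<xi> - z1) ^ Suc p)
      = contour_integral (circlepath 0 r1) (\<lambda>\<xi>. fact q / (2 * pi * \<i>) * contour_integral (circlepath 0 r2) (K \<xi>))"
  proof (rule contour_integral_eq)
    fix \<xi> assume "\<xi> \<in> path_image (circlepath 0 r1)"
    then have \<xi>: "cmod \<xi> < 1" using r z1 by auto
    note int = pderiv2_0_left_Cauchy(1)[OF an \<xi> z2]
    have "G \<xi> / (\<xi> - z1) ^ Suc p = fact q / (2 * pi * \<i>) *
        (contour_integral (circlepath 0 r2) (\<lambda>u. F (\<xi>, u) / (u - z2) ^ Suc q) / (\<xi> - z1) ^ Suc p)"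
      unfolding G_def pderiv2_0_left_Cauchy(2)[OF an \<xi> z2] by simp
    also have "\<dots> = fact q / (2 * pi * \<i>) *
        contour_integral (circlepath 0 r2) (\<lambda>u. F (\<xi>, u) / (u - z2) ^ Suc q / (\<xi> - z1) ^ Suc p)"
      unfolding contour_integral_div[OF int] ..
    also have "\<dots> = fact q / (2 * pi * \<i>) * contour_integral (circlepath 0 r2) (K \<xi>)"
      unfolding K_def by (simp add: mult.commute)
    finally show "G \<xi> / (\<xi> - z1) ^ Suc p = fact q / (2 * pi * \<i>) * contour_integral (circlepath 0 r2) (K \<xi>)" .
  qed
  also have "\<dots> = fact q / (2 * pi * \<i>) * contour_integral (circlepath 0 r1) (\<lambda>\<xi>. contour_integral (circlepath 0 r2) (K \<xi>))"
  proof (rule contour_integral_lmul)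
    have "continuous_on (sphere 0 r1) (\<lambda>\<xi>. contour_integral (circlepath 0 r2) (K \<xi>))"
      unfolding K_def
      by (rule continuous_on_contour_integral_circlepath_param[OF continuous_on_Cauchy_kernel2[OF an z1 z2]])
        (use r in simp)
    then show "(\<lambda>\<xi>. contour_integral (circlepath 0 r2) (K \<xi>)) contour_integrable_on circlepath 0 r1"
      using r by (intro contour_integrable_continuous_circlepath) simp
  qed
  finally show ?thesis unfolding K_def by (simp add: power2_eq_square)
qed

text \<open>
  \<open>pderiv2\<close> differentiates in z2 first. Both orders of differentiation are given by the
  same double Cauchy integral, up to exchanging the two contour integrals.
\<close>

lemma pderiv2_swap:
  assumes an: "analytic_D2 F" and z: "(z1, z2) \<in> D2"
  shows "pderiv2 F p q (z1, z2) = pderiv2 (F \<circ> prod.swap) q p (z2, z1)"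
proof -
  define r1 where "r1 = (1 + cmod z1) / 2"
  define r2 where "r2 = (1 + cmod z2) / 2"
  have r: "cmod z1 < r1" "r1 < 1" "cmod z2 < r2" "r2 < 1"
    using z by (auto simp: r1_def r2_def D2_def)
  have r0: "0 \<le> r1" "0 \<le> r2" using r norm_ge_zero[of z1] norm_ge_zero[of z2] by linarith+
  define K where "K = (\<lambda>\<xi> u. F (\<xi>, u) / ((\<xi> - z1) ^ Suc p * (u - z2) ^ Suc q))"
  have "pderiv2 F p q (z1, z2) = (fact p * fact q / (2 * pi * \<i>)\<^sup>2) *
     contour_integral (circlepath 0 r1) (\<lambda>\<xi>. contour_integral (circlepath 0 r2) (K \<xi>))"
    unfolding K_def by (rule pderiv2_double_Cauchy[OF an r])
  also have "contour_integral (circlepath 0 r1) (\<lambda>\<xi>. contour_integral (circlepath 0 r2) (K \<xi>))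
      = contour_integral (circlepath 0 r2) (\<lambda>u. contour_integral (circlepath 0 r1) (\<lambda>\<xi>. K \<xi> u))"
    unfolding K_def by (rule contour_integral_circlepath_swap[OF continuous_on_Cauchy_kernel2[OF an r] r0])
  also have "(fact p * fact q / (2 * pi * \<i>)\<^sup>2) * \<dots> = pderiv2 (F \<circ> prod.swap) q p (z2, z1)"
    unfolding pderiv2_double_Cauchy[OF analytic_D2_swap[OF an] r(3,4,1,2)] K_def
    by (simp add: mult.commute)
  finally show ?thesis .
qed

section \<open>Cauchy estimates and Taylor bounds\<close>

lemma Cauchy_inequality_subdisc:
  assumes h: "h holomorphic_on ball 0 1" and cb: "cball c \<rho> \<subseteq> ball 0 1" and \<rho>: "0 < \<rho>"
    and M: "\<And>w. w \<in> cball c \<rho> \<Longrightarrow> cmod (h w) \<le> M"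
  shows "cmod ((deriv ^^ n) h c) \<le> fact n * M / \<rho> ^ n"
proof (rule Cauchy_inequality[OF _ _ \<rho>])
  show "h holomorphic_on ball c \<rho>"
    using holomorphic_on_subset[OF h] cb ball_subset_cball by blast
  show "continuous_on (cball c \<rho>) h"
    using holomorphic_on_imp_continuous_on[OF holomorphic_on_subset[OF h cb]] .
  fix x assume "cmod (c - x) = \<rho>"
  then show "cmod (h x) \<le> M" by (intro M) (simp add: dist_norm)
qed

lemma pderiv2_Cauchy_estimate_fst:
  assumes an: "analytic_D2 F"
    and cb1: "cball a \<rho>1 \<subseteq> ball 0 1" and cb2: "cball b \<rho>2 \<subseteq> ball 0 1"
    and \<rho>: "0 < \<rho>1" "0 < \<rho>2"
    and M: "\<And>z. z \<in> pdisc (a, b) \<rho>1 \<rho>2 \<Longrightarrow> cmod (pderiv2 F k 0 z) \<le> M"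
  shows "cmod (pderiv2 F (k + i) j (a, b)) \<le> fact i * fact j * M / (\<rho>1 ^ i * \<rho>2 ^ j)"
proof -
  have a: "cmod a < 1" and b: "cmod b < 1"
    using cb1 cb2 \<rho> by (auto simp: subset_iff)
  define h where "h = (\<lambda>w2. pderiv2 (F \<circ> prod.swap) 0 (k + i) (w2, a))"
  have "pderiv2 F (k + i) j (a, b) = pderiv2 (F \<circ> prod.swap) j (k + i) (b, a)"
    by (rule pderiv2_swap[OF an]) (simp add: D2_def a b)
  also have "\<dots> = (deriv ^^ j) h b"
    unfolding h_def by (rule pderiv2_eq_higher_deriv_fst)
  finally have eq: "pderiv2 F (k + i) j (a, b) = (deriv ^^ j) h b" .
  have h_hol: "h holomorphic_on ball 0 1"
    unfolding h_def by (rule holomorphic_on_pderiv2_0_left[OF analytic_D2_swap[OF an] a])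
  have h_bound: "cmod (h w2) \<le> fact i * M / \<rho>1 ^ i" if w2: "w2 \<in> cball b \<rho>2" for w2
  proof -
    define g where "g = (deriv ^^ k) (\<lambda>w. F (w, w2))"
    have "h w2 = (deriv ^^ i) g a"
      by (simp add: h_def g_def pderiv2_0_left funpow_add add.commute)
    moreover have "cmod ((deriv ^^ i) g a) \<le> fact i * M / \<rho>1 ^ i"
    proof (rule Cauchy_inequality_subdisc[OF _ cb1 \<rho>(1)])
      show "g holomorphic_on ball 0 1"
        unfolding g_def using cb2 w2
        by (intro holomorphic_higher_deriv analytic_D2_holomorphic_fst[OF an] open_ball) auto
      fix w assume "w \<in> cball a \<rho>1"
      then have "(w, w2) \<in> pdisc (a, b) \<rho>1 \<rho>2"
        using w2 by (simp add: pdisc_def dist_norm norm_minus_commute)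
      then show "cmod (g w) \<le> M"
        using M[of "(w, w2)"] by (simp add: g_def pderiv2_0_right)
    qed
    ultimately show ?thesis by simp
  qed
  have "cmod ((deriv ^^ j) h b) \<le> fact j * (fact i * M / \<rho>1 ^ i) / \<rho>2 ^ j"
    by (rule Cauchy_inequality_subdisc[OF h_hol cb2 \<rho>(2) h_bound])
  then show ?thesis
    using eq by (simp add: field_simps)
qed

lemma pderiv2_Cauchy_estimate_snd:
  assumes an: "analytic_D2 F"
    and cb1: "cball a \<rho>1 \<subseteq> ball 0 1" and cb2: "cball b \<rho>2 \<subseteq> ball 0 1"
    and \<rho>: "0 < \<rho>1" "0 < \<rho>2"
    and M: "\<And>z. z \<in> pdisc (a, b) \<rho>1 \<rho>2 \<Longrightarrow> cmod (pderiv2 F 0 k z) \<le> M"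
  shows "cmod (pderiv2 F i (k + j) (a, b)) \<le> fact i * fact j * M / (\<rho>1 ^ i * \<rho>2 ^ j)"
proof -
  have a: "cmod a < 1" and b: "cmod b < 1"
    using cb1 cb2 \<rho> by (auto simp: subset_iff)
  have "cmod (pderiv2 (F \<circ> prod.swap) (k + j) i (b, a)) \<le> fact j * fact i * M / (\<rho>2 ^ j * \<rho>1 ^ i)"
  proof (rule pderiv2_Cauchy_estimate_fst[OF analytic_D2_swap[OF an] cb2 cb1 \<rho>(2,1)])
    fix z assume z: "z \<in> pdisc (b, a) \<rho>2 \<rho>1"
    obtain w2 w1 where zz: "z = (w2, w1)" by (cases z)
    have "w2 \<in> cball b \<rho>2" "w1 \<in> cball a \<rho>1"
      using z zz by (auto simp: pdisc_def dist_norm norm_minus_commute)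
    then have w: "(w1, w2) \<in> D2" "(w1, w2) \<in> pdisc (a, b) \<rho>1 \<rho>2"
      using cb1 cb2 z zz by (auto simp: D2_def pdisc_def)
    have "pderiv2 (F \<circ> prod.swap) k 0 z = pderiv2 F 0 k (w1, w2)"
      using pderiv2_swap[OF an w(1), of 0 k] zz by simp
    then show "cmod (pderiv2 (F \<circ> prod.swap) k 0 z) \<le> M"
      using M[OF w(2)] by simp
  qed
  moreover have "pderiv2 F i (k + j) (a, b) = pderiv2 (F \<circ> prod.swap) (k + j) i (b, a)"
    by (rule pderiv2_swap[OF an]) (simp add: D2_def a b)
  ultimately show ?thesis
    by (simp add: mult.commute)
qed

lemma norm_le_of_Taylor_terms_le_geometric:
  assumes g: "g holomorphic_on ball a R" and b: "cmod (b - a) < R"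
    and bd: "\<And>s. cmod ((deriv ^^ s) g a) * cmod (b - a) ^ s / fact s \<le> C * (1/2) ^ s"
  shows "cmod (g b) \<le> 2 * C"
proof -
  have "b \<in> ball a R" using b by (simp add: dist_norm norm_minus_commute)
  then have s: "(\<lambda>n. (deriv ^^ n) g a / fact n * (b - a) ^ n) sums g b"
    by (rule holomorphic_power_series[OF g])
  have "cmod (suminf (\<lambda>n. (deriv ^^ n) g a / fact n * (b - a) ^ n)) \<le> suminf (\<lambda>n. C * (1/2) ^ n)"
  proof (rule norm_suminf_le)
    fix n
    show "cmod ((deriv ^^ n) g a / fact n * (b - a) ^ n) \<le> C * (1 / 2) ^ n"
      using bd[of n] by (simp add: norm_mult norm_divide norm_power)
  qed (intro summable_mult summable_geometric, simp)
  also have "suminf (\<lambda>n. C * (1/2) ^ n) = 2 * C"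
    by (subst suminf_mult) (auto simp: suminf_geometric intro: summable_geometric)
  finally show ?thesis using sums_unique[OF s] by simp
qed

lemma fact_add_le_fact_mult_pow2: "(fact (k + s) :: real) \<le> fact k * fact s * 2 ^ (k + s)"
proof -
  have "fact k * fact s * ((k + s) choose k) = (fact (k + s) :: nat)"
    using binomial_fact_lemma[of k "k + s"] by simp
  moreover have "(k + s) choose k \<le> 2 ^ (k + s)" by (rule binomial_le_pow2)
  ultimately have "fact (k + s) \<le> fact k * fact s * (2::nat) ^ (k + s)"
    by (metis mult_le_mono2)
  then have "real (fact (k + s)) \<le> real (fact k * fact s * 2 ^ (k + s))"
    by linarith
  then show ?thesis by simp
qed

lemma Taylor_term_le_geometric:
  fixes C \<mu> d :: real
  assumes "0 \<le> C" "0 \<le> \<mu>" "0 \<le> d" "4 * \<mu> * d \<le> 1"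
  shows "C * fact (k + s) * \<mu> ^ (k + s) * d ^ s / fact s \<le> 2 ^ k * C * fact k * \<mu> ^ k * (1/2) ^ s"
proof -
  have "C * fact (k + s) * \<mu> ^ (k + s) * d ^ s \<le> C * (fact k * fact s * 2 ^ (k + s)) * \<mu> ^ (k + s) * d ^ s"
    using assms fact_add_le_fact_mult_pow2[of k s] by (intro mult_right_mono mult_left_mono) auto
  also have "\<dots> = fact s * (2 ^ k * C * fact k * \<mu> ^ k * (2 * \<mu> * d) ^ s)"
    by (simp add: power_add power_mult_distrib)
  also have "\<dots> \<le> fact s * (2 ^ k * C * fact k * \<mu> ^ k * (1/2) ^ s)"
    using assms by (intro mult_left_mono power_mono) auto
  finally show ?thesis
    by (simp add: divide_le_eq mult.commute)
qed

lemma pderiv2_shift_fst_bound: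
  assumes an: "analytic_D2 F" and z': "(x', y) \<in> D2" and near: "cmod (x - x') < 1 - cmod x'"
    and C: "0 \<le> C" and \<mu>: "0 \<le> \<mu>" "4 * \<mu> * cmod (x - x') \<le> 1"
    and bd: "\<And>s. cmod (pderiv2 F (k + s) m (x', y)) \<le> C * fact (k + s) * \<mu> ^ (k + s)"
  shows "cmod (pderiv2 F k m (x, y)) \<le> 2 ^ Suc k * C * fact k * \<mu> ^ k"
proof -
  have y: "cmod y < 1" and x': "cmod x' < 1" using z' by (auto simp: D2_def)
  define g where "g = (deriv ^^ k) (\<lambda>w. pderiv2 F 0 m (w, y))"
  have "g holomorphic_on ball 0 1"
    unfolding g_def by (intro holomorphic_higher_deriv holomorphic_on_pderiv2_0_left[OF an y] open_ball)
  moreover have "ball x' (1 - cmod x') \<subseteq> ball 0 1"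
  proof
    fix w assume "w \<in> ball x' (1 - cmod x')"
    then show "w \<in> ball 0 1"
      using norm_triangle_ineq2[of w x'] by (simp add: dist_norm norm_minus_commute)
  qed
  ultimately have g_hol: "g holomorphic_on ball x' (1 - cmod x')"
    by (rule holomorphic_on_subset)
  have g_deriv: "(deriv ^^ s) g x' = pderiv2 F (k + s) m (x', y)" for s
  proof -
    have "(deriv ^^ s) g = (deriv ^^ (s + k)) (\<lambda>w. pderiv2 F 0 m (w, y))"
      by (simp add: g_def funpow_add)
    then show ?thesis
      by (simp add: add.commute pderiv2_eq_higher_deriv_fst[of F "k + s"])
  qed
  have "cmod (g x) \<le> 2 * (2 ^ k * C * fact k * \<mu> ^ k)"
  proof (rule norm_le_of_Taylor_terms_le_geometric[OF g_hol near])
    fix s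
    have "cmod (pderiv2 F (k + s) m (x', y)) * cmod (x - x') ^ s / fact s
        \<le> C * fact (k + s) * \<mu> ^ (k + s) * cmod (x - x') ^ s / fact s"
      using bd[of s] by (intro divide_right_mono mult_right_mono) auto
    also have "\<dots> \<le> 2 ^ k * C * fact k * \<mu> ^ k * (1/2) ^ s"
      by (rule Taylor_term_le_geometric) (use C \<mu> in auto)
    finally show "cmod ((deriv ^^ s) g x') * cmod (x - x') ^ s / fact s \<le> 2 ^ k * C * fact k * \<mu> ^ k * (1/2) ^ s"
      by (simp add: g_deriv)
  qed
  moreover have "g x = pderiv2 F k m (x, y)"
    by (simp add: g_def pderiv2_eq_higher_deriv_fst[of F k])
  ultimately show ?thesis by simp
qed

lemma pderiv2_shift_snd_bound:
  assumes an: "analytic_D2 F" and z': "(x, y') \<in> D2" and near: "cmod (y - y') < 1 - cmod y'"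
    and C: "0 \<le> C" and \<mu>: "0 \<le> \<mu>" "4 * \<mu> * cmod (y - y') \<le> 1"
    and bd: "\<And>s. cmod (pderiv2 F m (k + s) (x, y')) \<le> C * fact (k + s) * \<mu> ^ (k + s)"
  shows "cmod (pderiv2 F m k (x, y)) \<le> 2 ^ Suc k * C * fact k * \<mu> ^ k"
proof -
  have "cmod x < 1" "cmod y < 1"
    using z' near norm_triangle_ineq2[of y y'] by (auto simp: D2_def)
  then have xy: "(x, y) \<in> D2" by (simp add: D2_def)
  have "cmod (pderiv2 (F \<circ> prod.swap) k m (y, x)) \<le> 2 ^ Suc k * C * fact k * \<mu> ^ k"
  proof (rule pderiv2_shift_fst_bound[OF analytic_D2_swap[OF an] _ near C \<mu>])
    show "(y', x) \<in> D2" using z' by (simp add: D2_def)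
    show "cmod (pderiv2 (F \<circ> prod.swap) (k + s) m (y', x)) \<le> C * fact (k + s) * \<mu> ^ (k + s)" for s
      using bd[of s] pderiv2_swap[OF an z', of m "k + s"] by simp
  qed
  then show ?thesis
    using pderiv2_swap[OF an xy, of m k] by simp
qed

lemma D2_eq_ball_times_ball: "D2 = ball 0 1 \<times> ball 0 1"
  by (auto simp: D2_def)

lemma pdisc_eq_cball_times_cball: "pdisc z0 r1 r2 = cball (fst z0) r1 \<times> cball (snd z0) r2"
  by (auto simp: pdisc_def dist_norm norm_minus_commute)

lemma L_pos_and_cball_subset_ball:
  assumes "cmod a < 1" "0 < \<beta>" "\<beta> / (1 - cmod a) < l"
  shows "0 < l" and "cball a (\<beta> / l) \<subseteq> ball 0 1"
proof -
  have d: "0 < 1 - cmod a" using assms(1) by simp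
  then show l: "0 < l" using assms(2,3) divide_pos_pos less_trans by blast
  then have rl: "\<beta> / l < 1 - cmod a" using assms d by (simp add: field_simps)
  show "cball a (\<beta> / l) \<subseteq> ball 0 1"
  proof
    fix w assume "w \<in> cball a (\<beta> / l)"
    then have "cmod (w - a) \<le> \<beta> / l" by (simp add: dist_norm norm_minus_commute)
    then show "w \<in> ball 0 1" using rl norm_triangle_ineq2[of w a] by simp
  qed
qed

lemma finite_pairs_sum_le: "finite {f k1 k2 | k1 k2. k1 + k2 \<le> (n::nat)}"
proof (rule finite_subset[of _ "(\<lambda>(a, b). f a b) ` ({..n} \<times> {..n})"])
  show "{f k1 k2 |k1 k2. k1 + k2 \<le> n} \<subseteq> (\<lambda>(a, b). f a b) ` ({..n} \<times> {..n})"
    by (auto simp: image_iff)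
qed auto

lemma le_Max_pairs_sum_le: "k1 + k2 \<le> n \<Longrightarrow> (f k1 k2::real) \<le> Max {f k1 k2 | k1 k2. k1 + k2 \<le> (n::nat)}"
  by (rule Max_ge[OF finite_pairs_sum_le]) blast

lemma ndrv_nonneg: "0 \<le> l1 z \<Longrightarrow> 0 \<le> l2 z \<Longrightarrow> 0 \<le> ndrv F l1 l2 p q z"
  by (simp add: ndrv_def)

lemma fact_mult_fact_le_fact_add: "fact i * fact k \<le> (fact (k + i) :: real)"
proof -
  have "fact k * fact i * ((k + i) choose k) = (fact (k + i) :: nat)"
    using binomial_fact_lemma[of k "k + i"] by simp
  moreover have "(k + i) choose k \<ge> 1"
    by (simp add: Suc_leI)
  ultimately have "fact k * fact i \<le> (fact (k + i) :: nat)"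
    by (metis mult.right_neutral mult_le_mono2)
  then have "real (fact k * fact i) \<le> real (fact (k + i))" by linarith
  then show ?thesis by (simp add: mult.commute)
qed

section \<open>Bounded index from local dominance\<close>

lemma ndrv_decay_fst:
  assumes an: "analytic_D2 F" and z0: "z0 \<in> D2" and \<beta>: "0 < \<beta>" and p: "0 \<le> p"
    and low1: "\<beta> / (1 - cmod (fst z0)) < l1 z0" and low2: "\<beta> / (1 - cmod (snd z0)) < l2 z0"
    and dom: "\<forall>z\<in>pdisc z0 (\<beta> / l1 z0) (\<beta> / l2 z0). cmod (pderiv2 F k 0 z) \<le> p * cmod (pderiv2 F k 0 z0)"
  shows "ndrv F l1 l2 (k + i) j z0 * \<beta> ^ (i + j) \<le> p * ndrv F l1 l2 k 0 z0"
proof -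
  obtain a b where ab: "z0 = (a, b)" by (cases z0)
  define L1 where "L1 = l1 z0"
  define L2 where "L2 = l2 z0"
  have ab_in: "cmod a < 1" "cmod b < 1" using z0 ab by (auto simp: D2_def)
  note c1 = L_pos_and_cball_subset_ball[OF ab_in(1) \<beta>, of L1]
   and c2 = L_pos_and_cball_subset_ball[OF ab_in(2) \<beta>, of L2]
  have L: "0 < L1" "0 < L2" using c1(1) c2(1) low1 low2 ab by (auto simp: L1_def L2_def)
  define X where "X = cmod (pderiv2 F k 0 z0)"
  have "cmod (pderiv2 F (k + i) j z0) \<le> fact i * fact j * (p * X) / ((\<beta> / L1) ^ i * (\<beta> / L2) ^ j)"
    unfolding ab X_def
    by (rule pderiv2_Cauchy_estimate_fst[OF an c1(2) c2(2)])
      (use dom ab low1 low2 L \<beta> in \<open>auto simp: L1_def L2_def\<close>)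
  then have est: "cmod (pderiv2 F (k + i) j z0) * \<beta> ^ (i + j) \<le> fact i * fact j * p * X * L1 ^ i * L2 ^ j"
    using L \<beta> by (simp add: field_simps power_add)
  have "ndrv F l1 l2 (k + i) j z0 * \<beta> ^ (i + j)
      = cmod (pderiv2 F (k + i) j z0) * \<beta> ^ (i + j) / (fact (k + i) * fact j * L1 ^ (k + i) * L2 ^ j)"
    by (simp add: ndrv_def L1_def L2_def)
  also have "\<dots> \<le> fact i * fact j * p * X * L1 ^ i * L2 ^ j / (fact (k + i) * fact j * L1 ^ (k + i) * L2 ^ j)"
    using L by (intro divide_right_mono est) auto
  also have "\<dots> = fact i * p * X / (fact (k + i) * L1 ^ k)"
    using L by (simp add: field_simps power_add)
  also have "\<dots> \<le> fact i * p * X / (fact i * fact k * L1 ^ k)"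
    using L p fact_mult_fact_le_fact_add[of i k] by (intro divide_left_mono mult_right_mono) (auto simp: X_def)
  also have "\<dots> = p * ndrv F l1 l2 k 0 z0"
    by (simp add: ndrv_def X_def L1_def)
  finally show ?thesis .
qed

lemma ndrv_decay_snd:
  assumes an: "analytic_D2 F" and z0: "z0 \<in> D2" and \<beta>: "0 < \<beta>" and p: "0 \<le> p"
    and low1: "\<beta> / (1 - cmod (fst z0)) < l1 z0" and low2: "\<beta> / (1 - cmod (snd z0)) < l2 z0"
    and dom: "\<forall>z\<in>pdisc z0 (\<beta> / l1 z0) (\<beta> / l2 z0). cmod (pderiv2 F 0 k z) \<le> p * cmod (pderiv2 F 0 k z0)"
  shows "ndrv F l1 l2 i (k + j) z0 * \<beta> ^ (i + j) \<le> p * ndrv F l1 l2 0 k z0"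
proof -
  obtain a b where ab: "z0 = (a, b)" by (cases z0)
  define L1 where "L1 = l1 z0"
  define L2 where "L2 = l2 z0"
  have ab_in: "cmod a < 1" "cmod b < 1" using z0 ab by (auto simp: D2_def)
  note c1 = L_pos_and_cball_subset_ball[OF ab_in(1) \<beta>, of L1]
   and c2 = L_pos_and_cball_subset_ball[OF ab_in(2) \<beta>, of L2]
  have L: "0 < L1" "0 < L2" using c1(1) c2(1) low1 low2 ab by (auto simp: L1_def L2_def)
  define X where "X = cmod (pderiv2 F 0 k z0)"
  have "cmod (pderiv2 F i (k + j) z0) \<le> fact i * fact j * (p * X) / ((\<beta> / L1) ^ i * (\<beta> / L2) ^ j)"
    unfolding ab X_def
    by (rule pderiv2_Cauchy_estimate_snd[OF an c1(2) c2(2)])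
      (use dom ab low1 low2 L \<beta> in \<open>auto simp: L1_def L2_def\<close>)
  then have est: "cmod (pderiv2 F i (k + j) z0) * \<beta> ^ (i + j) \<le> fact i * fact j * p * X * L1 ^ i * L2 ^ j"
    using L \<beta> by (simp add: field_simps power_add)
  have "ndrv F l1 l2 i (k + j) z0 * \<beta> ^ (i + j)
      = cmod (pderiv2 F i (k + j) z0) * \<beta> ^ (i + j) / (fact i * fact (k + j) * L1 ^ i * L2 ^ (k + j))"
    by (simp add: ndrv_def L1_def L2_def)
  also have "\<dots> \<le> fact i * fact j * p * X * L1 ^ i * L2 ^ j / (fact i * fact (k + j) * L1 ^ i * L2 ^ (k + j))"
    using L by (intro divide_right_mono est) auto
  also have "\<dots> = fact j * p * X / (fact (k + j) * L2 ^ k)"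
    using L by (simp add: field_simps power_add)
  also have "\<dots> \<le> fact j * p * X / (fact j * fact k * L2 ^ k)"
    using L p fact_mult_fact_le_fact_add[of j k] by (intro divide_left_mono mult_right_mono) (auto simp: X_def)
  also have "\<dots> = p * ndrv F l1 l2 0 k z0"
    by (simp add: ndrv_def X_def L2_def)
  finally show ?thesis .
qed

lemma le_Max_of_geometric_decay:
  fixes f :: "nat \<Rightarrow> nat \<Rightarrow> real"
  assumes nonneg: "\<And>m1 m2. 0 \<le> f m1 m2" and p: "0 < p" "p \<le> \<beta> ^ N" and \<beta>: "1 \<le> \<beta>"
    and k: "k1 \<le> n0" "k2 \<le> n0"
    and decay1: "\<And>i j. f (k1 + i) j * \<beta> ^ (i + j) \<le> p * f k1 0"
    and decay2: "\<And>i j. f i (k2 + j) * \<beta> ^ (i + j) \<le> p * f 0 k2"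
  shows "f P1 P2 \<le> Max {f k1 k2 | k1 k2. k1 + k2 \<le> 2 * n0 + N}"
proof -
  have dominated: "f P1 P2 \<le> c" if "f P1 P2 * \<beta> ^ m \<le> p * c" "N \<le> m" for c m
  proof -
    have "p * f P1 P2 \<le> \<beta> ^ m * f P1 P2"
      using p power_increasing[OF \<open>N \<le> m\<close> \<beta>] nonneg by (intro mult_right_mono) auto
    also have "\<dots> \<le> p * c"
      using that(1) by (simp add: mult.commute)
    finally show ?thesis
      using p(1) by simp
  qed
  consider "P1 + P2 \<le> 2 * n0 + N" | "k1 \<le> P1" "N \<le> P1 - k1 + P2" | "P1 < k1" "N \<le> P1 + (P2 - k2)" "k2 \<le> P2"
    using k by linarith
  then show ?thesis
  proof cases
    case 1
    then show ?thesis by (rule le_Max_pairs_sum_le)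
  next
    case 2
    then have "f P1 P2 \<le> f k1 0"
      using decay1[of "P1 - k1" P2] by (intro dominated) auto
    also have "\<dots> \<le> Max {f k1 k2 | k1 k2. k1 + k2 \<le> 2 * n0 + N}"
      using k by (intro le_Max_pairs_sum_le) simp
    finally show ?thesis .
  next
    case 3
    then have "f P1 P2 \<le> f 0 k2"
      using decay2[of P1 "P2 - k2"] by (intro dominated) auto
    also have "\<dots> \<le> Max {f k1 k2 | k1 k2. k1 + k2 \<le> 2 * n0 + N}"
      using k by (intro le_Max_pairs_sum_le) simp
    finally show ?thesis .
  qed
qed

lemma bounded_L_index_jointI:
  assumes \<beta>: "\<beta> > 1" and an: "analytic_D2 F"
    and low1: "\<forall>z\<in>D2. l1 z > \<beta> / (1 - cmod (fst z))"
    and low2: "\<forall>z\<in>D2. l2 z > \<beta> / (1 - cmod (snd z))"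
    and dominance: "\<exists>n0 p. p \<ge> 1 \<and> (\<forall>z0\<in>D2. \<exists>k1 k2. k1 \<le> n0 \<and> k2 \<le> n0 \<and>
             (\<forall>z\<in>pdisc z0 (\<beta> / l1 z0) (\<beta> / l2 z0).
                cmod (pderiv2 F k1 0 z) \<le> p * cmod (pderiv2 F k1 0 z0)) \<and>
             (\<forall>z\<in>pdisc z0 (\<beta> / l1 z0) (\<beta> / l2 z0).
                cmod (pderiv2 F 0 k2 z) \<le> p * cmod (pderiv2 F 0 k2 z0)))"
  shows "bounded_L_index_joint F l1 l2"
proof -
  obtain n0 p where p: "p \<ge> 1" and dom: "\<forall>z0\<in>D2. \<exists>k1 k2. k1 \<le> n0 \<and> k2 \<le> n0 \<and>
             (\<forall>z\<in>pdisc z0 (\<beta> / l1 z0) (\<beta> / l2 z0).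
                cmod (pderiv2 F k1 0 z) \<le> p * cmod (pderiv2 F k1 0 z0)) \<and>
             (\<forall>z\<in>pdisc z0 (\<beta> / l1 z0) (\<beta> / l2 z0).
                cmod (pderiv2 F 0 k2 z) \<le> p * cmod (pderiv2 F 0 k2 z0))"
    using dominance by blast
  obtain N where N: "p < \<beta> ^ N" using real_arch_pow[OF \<beta>] by blast
  show ?thesis
    unfolding bounded_L_index_joint_def
  proof (intro exI[of _ "2 * n0 + N"] ballI allI)
    fix z0 P1 P2 assume z0: "z0 \<in> D2"
    obtain k1 k2 where k: "k1 \<le> n0" "k2 \<le> n0"
      and dom1: "\<forall>z\<in>pdisc z0 (\<beta> / l1 z0) (\<beta> / l2 z0). cmod (pderiv2 F k1 0 z) \<le> p * cmod (pderiv2 F k1 0 z0)"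
      and dom2: "\<forall>z\<in>pdisc z0 (\<beta> / l1 z0) (\<beta> / l2 z0). cmod (pderiv2 F 0 k2 z) \<le> p * cmod (pderiv2 F 0 k2 z0)"
      using dom z0 by blast
    have \<beta>0: "0 < \<beta>" and p0: "0 \<le> p" using \<beta> p by simp_all
    have low: "\<beta> / (1 - cmod (fst z0)) < l1 z0" "\<beta> / (1 - cmod (snd z0)) < l2 z0"
      using low1 low2 z0 by auto
    have l: "0 < l1 z0" "0 < l2 z0"
      using L_pos_and_cball_subset_ball(1)[OF _ \<beta>0 low(1)] L_pos_and_cball_subset_ball(1)[OF _ \<beta>0 low(2)] z0
      by (auto simp: D2_def)
    show "ndrv F l1 l2 P1 P2 z0 \<le> Max {ndrv F l1 l2 k1 k2 z0 | k1 k2. k1 + k2 \<le> 2 * n0 + N}"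
    proof (rule le_Max_of_geometric_decay[where f="\<lambda>m1 m2. ndrv F l1 l2 m1 m2 z0", OF _ _ _ _ k])
      show "ndrv F l1 l2 (k1 + i) j z0 * \<beta> ^ (i + j) \<le> p * ndrv F l1 l2 k1 0 z0" for i j
        by (rule ndrv_decay_fst[where ?l1.0=l1 and ?l2.0=l2, OF an z0 \<beta>0 p0 low dom1])
      show "ndrv F l1 l2 i (k2 + j) z0 * \<beta> ^ (i + j) \<le> p * ndrv F l1 l2 0 k2 z0" for i j
        by (rule ndrv_decay_snd[where ?l1.0=l1 and ?l2.0=l2, OF an z0 \<beta>0 p0 low dom2])
      show "0 \<le> ndrv F l1 l2 m1 m2 z0" for m1 m2
        using l by (simp add: ndrv_nonneg)
    qed (use N p \<beta> in auto)
  qed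
qed

section \<open>Local dominance from bounded index\<close>

lemma ratio_set_bounds:
  assumes Inf_pos: "0 < Inf (ratio_set l1 l2 l r1 r2)" and bdd: "bdd_above (ratio_set l1 l2 l r1 r2)"
    and l_pos: "\<And>z. z \<in> D2 \<Longrightarrow> 0 < l z"
  obtains lo hi where "0 < lo" "lo \<le> 1" "1 \<le> hi"
    and "\<And>z0 z. z0 \<in> D2 \<Longrightarrow> z \<in> D2 \<Longrightarrow> z \<in> pdisc z0 (r1 / l1 z0) (r2 / l2 z0) \<Longrightarrow>
           lo * l z0 \<le> l z \<and> l z \<le> hi * l z0"
proof
  let ?R = "ratio_set l1 l2 l r1 r2"
  show "0 < min 1 (Inf ?R)" "min 1 (Inf ?R) \<le> 1" "1 \<le> max 1 (Sup ?R)"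
    using Inf_pos by auto
  fix z0 z assume z0: "z0 \<in> D2" and z: "z \<in> D2" "z \<in> pdisc z0 (r1 / l1 z0) (r2 / l2 z0)"
  then have mem: "l z / l z0 \<in> ?R"
    unfolding ratio_set_def by blast
  have "bdd_below ?R"
    unfolding ratio_set_def by (auto intro!: bdd_belowI[of _ 0] simp: l_pos less_imp_le)
  then have "min 1 (Inf ?R) \<le> l z / l z0" "l z / l z0 \<le> max 1 (Sup ?R)"
    using cInf_lower[OF mem] cSup_upper[OF mem bdd] by auto
  then show "min 1 (Inf ?R) * l z0 \<le> l z \<and> l z \<le> max 1 (Sup ?R) * l z0"
    using l_pos[OF z0] by (simp add: pos_le_divide_eq pos_divide_le_eq)
qed

lemma exists_step_towards_centre:
  fixes x a :: complex
  assumes "cmod (x - a) \<le> real (Suc m) * \<rho>" "0 \<le> \<rho>"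
  shows "\<exists>x'. cmod (x' - a) \<le> real m * \<rho> \<and> cmod (x - x') \<le> \<rho>"
proof (cases "cmod (x - a) \<le> real m * \<rho>")
  case True
  then show ?thesis using assms by (intro exI[of _ x]) auto
next
  case False
  define c where "c = real m * \<rho> / cmod (x - a)"
  have d: "real m * \<rho> < cmod (x - a)" "0 \<le> real m * \<rho>"
    using False assms(2) by auto
  then have "0 < cmod (x - a)" by linarith
  then have c: "0 \<le> c" "c < 1" "c * cmod (x - a) = real m * \<rho>"
    using d by (auto simp: c_def)
  define x' where "x' = a + of_real c * (x - a)"
  have "cmod (x' - a) = real m * \<rho>"
    using c by (simp add: x'_def norm_mult)
  moreover have "cmod (x - x') = (1 - c) * cmod (x - a)"
  proof -
    have "x - x' = of_real (1 - c) * (x - a)" by (simp add: x'_def algebra_simps)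
    then have "cmod (x - x') = \<bar>1 - c\<bar> * cmod (x - a)" by (simp only: norm_mult norm_of_real)
    then show ?thesis using c by simp
  qed
  ultimately show ?thesis
    using c assms(1) by (intro exI[of _ x']) (simp add: algebra_simps)
qed

lemma ndrv_antimono_weights:
  assumes "0 < \<mu>1" "\<mu>1 \<le> l1 z" "0 < \<mu>2" "\<mu>2 \<le> l2 z"
  shows "ndrv F l1 l2 k1 k2 z \<le> ndrv F (\<lambda>_. \<mu>1) (\<lambda>_. \<mu>2) k1 k2 z"
  unfolding ndrv_def using assms
  by (intro divide_left_mono mult_mono power_mono mult_pos_pos) auto

lemma ndrv_const_weights_scale:
  assumes "0 < c"
  shows "ndrv F (\<lambda>_. c * L1) (\<lambda>_. c * L2) k1 k2 z = ndrv F (\<lambda>_. L1) (\<lambda>_. L2) k1 k2 z / c ^ (k1 + k2)"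
  using assms by (simp add: ndrv_def power_add field_simps)

lemma norm_pderiv2_le_of_ndrv_le:
  assumes "ndrv F l1 l2 k1 k2 z \<le> M" "0 < l1 z" "0 < l2 z"
  shows "cmod (pderiv2 F k1 k2 z) \<le> M * fact k1 * fact k2 * l1 z ^ k1 * l2 z ^ k2"
  using assms by (simp add: ndrv_def pos_divide_le_eq mult.assoc)

lemma ndrv_const_weights_le_of_norm_pderiv2_le:
  assumes bd: "cmod (pderiv2 F k1 k2 z) \<le> 2 ^ Suc k * M * fact k1 * fact k2 * \<mu>1 ^ k1 * \<mu>2 ^ k2"
    and M: "0 \<le> M" and \<mu>: "0 \<le> \<mu>1" "\<mu>1 \<le> h * L1" "0 \<le> \<mu>2" "\<mu>2 \<le> h * L2"
    and L: "0 < L1" "0 < L2" and h: "1 \<le> h" and k: "k \<le> N" "k1 + k2 \<le> N"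
  shows "ndrv F (\<lambda>_. L1) (\<lambda>_. L2) k1 k2 z \<le> 2 * (2 * h) ^ N * M"
proof -
  have "2 ^ k * (\<mu>1 ^ k1 * \<mu>2 ^ k2) \<le> 2 ^ N * ((h * L1) ^ k1 * (h * L2) ^ k2)"
    using \<mu> k by (intro mult_mono power_increasing power_mono) auto
  also have "\<dots> = 2 ^ N * h ^ (k1 + k2) * (L1 ^ k1 * L2 ^ k2)"
    by (simp add: power_mult_distrib power_add)
  also have "\<dots> \<le> 2 ^ N * h ^ N * (L1 ^ k1 * L2 ^ k2)"
    using h k L by (intro mult_right_mono mult_left_mono power_increasing) auto
  finally have "2 ^ Suc k * M * fact k1 * fact k2 * \<mu>1 ^ k1 * \<mu>2 ^ k2
      \<le> (2 * (2 * h) ^ N * M) * (fact k1 * fact k2 * L1 ^ k1 * L2 ^ k2)"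
    using M by (simp add: power_mult_distrib mult_ac mult_left_mono)
  with bd have "cmod (pderiv2 F k1 k2 z) \<le> (2 * (2 * h) ^ N * M) * (fact k1 * fact k2 * L1 ^ k1 * L2 ^ k2)"
    by linarith
  then show ?thesis
    using L by (simp add: ndrv_def pos_divide_le_eq)
qed

text \<open>
  Part (i) is proved in this context: N is an index of F, and lo, hi are the bounds on
  L(z)/L(z0) that the class Q2 provides for R = (\<beta>, \<beta>).
\<close>

locale joint_index_propagation =
  fixes \<beta> :: real and l1 l2 :: "complex \<times> complex \<Rightarrow> real" and F :: "complex \<times> complex \<Rightarrow> complex"
    and N :: nat and lo hi :: real
  assumes beta: "1 < \<beta>"
    and analytic: "analytic_D2 F"
    and low1: "\<forall>z\<in>D2. \<beta> / (1 - cmod (fst z)) < l1 z"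
    and low2: "\<forall>z\<in>D2. \<beta> / (1 - cmod (snd z)) < l2 z"
    and index: "\<forall>z\<in>D2. \<forall>P1 P2. ndrv F l1 l2 P1 P2 z \<le> Max {ndrv F l1 l2 k1 k2 z | k1 k2. k1 + k2 \<le> N}"
    and lo: "0 < lo" "lo \<le> 1" and hi: "1 \<le> hi"
    and ratio: "\<And>z0 z. z0 \<in> D2 \<Longrightarrow> z \<in> D2 \<Longrightarrow> z \<in> pdisc z0 (\<beta> / l1 z0) (\<beta> / l2 z0) \<Longrightarrow>
                  lo * l1 z0 \<le> l1 z \<and> l1 z \<le> hi * l1 z0 \<and> lo * l2 z0 \<le> l2 z \<and> l2 z \<le> hi * l2 z0"
begin

lemma
  assumes "z \<in> D2"
  shows l1_pos: "0 < l1 z" and l2_pos: "0 < l2 z"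
    and cball_l1_subset: "cball (fst z) (\<beta> / l1 z) \<subseteq> ball 0 1"
    and cball_l2_subset: "cball (snd z) (\<beta> / l2 z) \<subseteq> ball 0 1"
proof -
  have z: "cmod (fst z) < 1" "cmod (snd z) < 1" using assms by (simp_all add: D2_def)
  have \<beta>0: "0 < \<beta>" using beta by simp
  have "\<beta> / (1 - cmod (fst z)) < l1 z" "\<beta> / (1 - cmod (snd z)) < l2 z"
    using low1 low2 assms by simp_all
  from L_pos_and_cball_subset_ball[OF z(1) \<beta>0 this(1)] L_pos_and_cball_subset_ball[OF z(2) \<beta>0 this(2)]
  show "0 < l1 z" "0 < l2 z" "cball (fst z) (\<beta> / l1 z) \<subseteq> ball 0 1" "cball (snd z) (\<beta> / l2 z) \<subseteq> ball 0 1"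
    by simp_all
qed

lemma pdisc_subset_D2:
  assumes "z0 \<in> D2"
  shows "pdisc z0 (\<beta> / l1 z0) (\<beta> / l2 z0) \<subseteq> D2"
  unfolding pdisc_eq_cball_times_cball D2_eq_ball_times_ball
  by (intro Sigma_mono cball_l1_subset[OF assms] cball_l2_subset[OF assms])

lemma step_fst_in_disc:
  assumes z: "(x', y) \<in> D2" and close: "4 * l1 (x', y) * cmod (x - x') \<le> 1"
  shows "cmod (x - x') < 1 - cmod x'"
proof -
  have "cmod x' < 1" using z by (simp add: D2_def)
  moreover have "\<beta> / (1 - cmod x') < l1 (x', y)" using low1 z by auto
  ultimately have "1 < l1 (x', y) * (1 - cmod x')"
    using beta by (simp add: divide_less_eq mult.commute)
  with close have "l1 (x', y) * cmod (x - x') < l1 (x', y) * (1 - cmod x')"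
    by linarith
  then show ?thesis
    using l1_pos[OF z] by simp
qed

lemma step_snd_in_disc:
  assumes z: "(x, y') \<in> D2" and close: "4 * l2 (x, y') * cmod (y - y') \<le> 1"
  shows "cmod (y - y') < 1 - cmod y'"
proof -
  have "cmod y' < 1" using z by (simp add: D2_def)
  moreover have "\<beta> / (1 - cmod y') < l2 (x, y')" using low2 z by auto
  ultimately have "1 < l2 (x, y') * (1 - cmod y')"
    using beta by (simp add: divide_less_eq mult.commute)
  with close have "l2 (x, y') * cmod (y - y') < l2 (x, y') * (1 - cmod y')"
    by linarith
  then show ?thesis
    using l2_pos[OF z] by simp
qed

text \<open>
  Around a centre z0 we normalise derivatives by the constant weights L(z0) instead of L(z);
  a bound K for these frozen normalised derivatives of order at most N on a set S is recorded
  by \<open>frozen_bounded z0 S K\<close>.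
\<close>

definition frozen_bounded :: "complex \<times> complex \<Rightarrow> (complex \<times> complex) set \<Rightarrow> real \<Rightarrow> bool" where
  "frozen_bounded z0 S K \<longleftrightarrow>
     (\<forall>z\<in>S. \<forall>k1 k2. k1 + k2 \<le> N \<longrightarrow> ndrv F (\<lambda>_. l1 z0) (\<lambda>_. l2 z0) k1 k2 z \<le> K)"

lemma frozen_bounded_nonneg:
  assumes "z0 \<in> D2" "frozen_bounded z0 S K" "z \<in> S"
  shows "0 \<le> K"
proof -
  have "0 \<le> ndrv F (\<lambda>_. l1 z0) (\<lambda>_. l2 z0) 0 0 z"
    using l1_pos[OF assms(1)] l2_pos[OF assms(1)] by (intro ndrv_nonneg) auto
  also have "\<dots> \<le> K"
    using assms(2,3) by (simp add: frozen_bounded_def)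
  finally show ?thesis .
qed

lemma ndrv_le_of_frozen_bounded:
  assumes z0: "z0 \<in> D2" and z: "z \<in> pdisc z0 (\<beta> / l1 z0) (\<beta> / l2 z0)"
    and K: "frozen_bounded z0 {z} K"
  shows "ndrv F l1 l2 P1 P2 z \<le> K / lo ^ N"
proof -
  have zD: "z \<in> D2" using pdisc_subset_D2[OF z0] z by blast
  note rz = ratio[OF z0 zD z]
  have l0: "0 < l1 z0" "0 < l2 z0" using l1_pos[OF z0] l2_pos[OF z0] by auto
  have K0: "0 \<le> K" using frozen_bounded_nonneg[OF z0 K] by simp
  have "ndrv F l1 l2 P1 P2 z \<le> Max {ndrv F l1 l2 k1 k2 z | k1 k2. k1 + k2 \<le> N}"
    using index zD by simp
  also have "\<dots> \<le> K / lo ^ N"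
  proof (rule Max.boundedI[OF finite_pairs_sum_le])
    have "ndrv F l1 l2 0 0 z \<in> {ndrv F l1 l2 k1 k2 z | k1 k2. k1 + k2 \<le> N}"
      by (rule CollectI, rule exI[of _ 0], rule exI[of _ 0]) simp
    then show "{ndrv F l1 l2 k1 k2 z | k1 k2. k1 + k2 \<le> N} \<noteq> {}" by auto
    fix v assume "v \<in> {ndrv F l1 l2 k1 k2 z | k1 k2. k1 + k2 \<le> N}"
    then obtain k1 k2 where k: "k1 + k2 \<le> N" and v: "v = ndrv F l1 l2 k1 k2 z" by blast
    have "ndrv F l1 l2 k1 k2 z \<le> ndrv F (\<lambda>_. lo * l1 z0) (\<lambda>_. lo * l2 z0) k1 k2 z"
      using rz lo l0 by (intro ndrv_antimono_weights) auto
    also have "\<dots> = ndrv F (\<lambda>_. l1 z0) (\<lambda>_. l2 z0) k1 k2 z / lo ^ (k1 + k2)"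
      by (rule ndrv_const_weights_scale[OF lo(1)])
    also have "\<dots> \<le> K / lo ^ (k1 + k2)"
      using K k lo by (simp add: frozen_bounded_def divide_right_mono)
    also have "\<dots> \<le> K / lo ^ N"
    proof (rule divide_left_mono[OF _ K0])
      show "lo ^ N \<le> lo ^ (k1 + k2)" using lo k by (intro power_decreasing) auto
      show "0 < lo ^ (k1 + k2) * lo ^ N" using lo by simp
    qed
    finally show "v \<le> K / lo ^ N" using v by simp
  qed
  finally show ?thesis .
qed

lemma frozen_bounded_step_fst:
  assumes z0: "z0 \<in> D2" and z': "(x', y) \<in> pdisc z0 (\<beta> / l1 z0) (\<beta> / l2 z0)"
    and K: "frozen_bounded z0 {(x', y)} K" and close: "4 * hi * l1 z0 * cmod (x - x') \<le> 1"
  shows "frozen_bounded z0 {(x, y)} (2 * (2 * hi) ^ N / lo ^ N * K)"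
  unfolding frozen_bounded_def
proof (intro ballI allI impI)
  fix z k1 k2 assume "z \<in> {(x, y)}" and k: "k1 + k2 \<le> N"
  define M where "M = K / lo ^ N"
  have z'D: "(x', y) \<in> D2" using pdisc_subset_D2[OF z0] z' by blast
  note rz = ratio[OF z0 z'D z']
  have l0: "0 < l1 z0" "0 < l2 z0" and l': "0 < l1 (x', y)" "0 < l2 (x', y)"
    using l1_pos l2_pos z0 z'D by auto
  have M_bound: "ndrv F l1 l2 P1 P2 (x', y) \<le> M" for P1 P2
    unfolding M_def by (rule ndrv_le_of_frozen_bounded[OF z0 z' K])
  have M0: "0 \<le> M" unfolding M_def using frozen_bounded_nonneg[OF z0 K] lo by simp
  have "4 * l1 (x', y) * cmod (x - x') \<le> 4 * (hi * l1 z0) * cmod (x - x')"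
    using rz by (intro mult_right_mono mult_left_mono) auto
  with close have close': "4 * l1 (x', y) * cmod (x - x') \<le> 1"
    by (simp add: mult_ac)
  have "cmod (pderiv2 F k1 k2 (x, y))
      \<le> 2 ^ Suc k1 * (M * fact k2 * l2 (x', y) ^ k2) * fact k1 * l1 (x', y) ^ k1"
  proof (rule pderiv2_shift_fst_bound[OF analytic z'D step_fst_in_disc[OF z'D close'] _ _ close'])
    show "cmod (pderiv2 F (k1 + s) k2 (x', y))
        \<le> M * fact k2 * l2 (x', y) ^ k2 * fact (k1 + s) * l1 (x', y) ^ (k1 + s)" for s
      using norm_pderiv2_le_of_ndrv_le[OF M_bound l', of "k1 + s" k2] by (simp add: mult_ac)
  qed (use M0 l' in auto)
  then have "cmod (pderiv2 F k1 k2 (x, y))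
      \<le> 2 ^ Suc k1 * M * fact k1 * fact k2 * l1 (x', y) ^ k1 * l2 (x', y) ^ k2"
    by (simp add: mult_ac)
  then have "ndrv F (\<lambda>_. l1 z0) (\<lambda>_. l2 z0) k1 k2 (x, y) \<le> 2 * (2 * hi) ^ N * M"
    by (rule ndrv_const_weights_le_of_norm_pderiv2_le[OF _ M0]) (use l' l0 rz hi k in auto)
  then show "ndrv F (\<lambda>_. l1 z0) (\<lambda>_. l2 z0) k1 k2 z \<le> 2 * (2 * hi) ^ N / lo ^ N * K"
    using \<open>z \<in> {(x, y)}\<close> by (simp add: M_def)
qed

lemma frozen_bounded_step_snd:
  assumes z0: "z0 \<in> D2" and z': "(x, y') \<in> pdisc z0 (\<beta> / l1 z0) (\<beta> / l2 z0)"
    and K: "frozen_bounded z0 {(x, y')} K" and close: "4 * hi * l2 z0 * cmod (y - y') \<le> 1"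
  shows "frozen_bounded z0 {(x, y)} (2 * (2 * hi) ^ N / lo ^ N * K)"
  unfolding frozen_bounded_def
proof (intro ballI allI impI)
  fix z k1 k2 assume "z \<in> {(x, y)}" and k: "k1 + k2 \<le> N"
  define M where "M = K / lo ^ N"
  have z'D: "(x, y') \<in> D2" using pdisc_subset_D2[OF z0] z' by blast
  note rz = ratio[OF z0 z'D z']
  have l0: "0 < l1 z0" "0 < l2 z0" and l': "0 < l1 (x, y')" "0 < l2 (x, y')"
    using l1_pos l2_pos z0 z'D by auto
  have M_bound: "ndrv F l1 l2 P1 P2 (x, y') \<le> M" for P1 P2
    unfolding M_def by (rule ndrv_le_of_frozen_bounded[OF z0 z' K])
  have M0: "0 \<le> M" unfolding M_def using frozen_bounded_nonneg[OF z0 K] lo by simp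
  have "4 * l2 (x, y') * cmod (y - y') \<le> 4 * (hi * l2 z0) * cmod (y - y')"
    using rz by (intro mult_right_mono mult_left_mono) auto
  with close have close': "4 * l2 (x, y') * cmod (y - y') \<le> 1"
    by (simp add: mult_ac)
  have "cmod (pderiv2 F k1 k2 (x, y))
      \<le> 2 ^ Suc k2 * (M * fact k1 * l1 (x, y') ^ k1) * fact k2 * l2 (x, y') ^ k2"
  proof (rule pderiv2_shift_snd_bound[OF analytic z'D step_snd_in_disc[OF z'D close'] _ _ close'])
    show "cmod (pderiv2 F k1 (k2 + s) (x, y'))
        \<le> M * fact k1 * l1 (x, y') ^ k1 * fact (k2 + s) * l2 (x, y') ^ (k2 + s)" for s
      using norm_pderiv2_le_of_ndrv_le[OF M_bound l', of k1 "k2 + s"] by (simp add: mult_ac)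
  qed (use M0 l' in auto)
  then have "cmod (pderiv2 F k1 k2 (x, y))
      \<le> 2 ^ Suc k2 * M * fact k1 * fact k2 * l1 (x, y') ^ k1 * l2 (x, y') ^ k2"
    by (simp add: mult_ac)
  then have "ndrv F (\<lambda>_. l1 z0) (\<lambda>_. l2 z0) k1 k2 (x, y) \<le> 2 * (2 * hi) ^ N * M"
    by (rule ndrv_const_weights_le_of_norm_pderiv2_le[OF _ M0]) (use l' l0 rz hi k in auto)
  then show "ndrv F (\<lambda>_. l1 z0) (\<lambda>_. l2 z0) k1 k2 z \<le> 2 * (2 * hi) ^ N / lo ^ N * K"
    using \<open>z \<in> {(x, y)}\<close> by (simp add: M_def)
qed

lemma frozen_bounded_grow_fst:
  assumes z0: "z0 \<in> D2" and \<rho>: "0 \<le> \<rho>" "4 * hi * l1 z0 * \<rho> \<le> 1"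
    and sub: "pdisc z0 (real m * \<rho>) r \<subseteq> pdisc z0 (\<beta> / l1 z0) (\<beta> / l2 z0)"
    and K: "frozen_bounded z0 (pdisc z0 (real m * \<rho>) r) K"
  shows "frozen_bounded z0 (pdisc z0 (real (Suc m) * \<rho>) r) (2 * (2 * hi) ^ N / lo ^ N * K)"
  unfolding frozen_bounded_def
proof (intro ballI)
  fix z assume z: "z \<in> pdisc z0 (real (Suc m) * \<rho>) r"
  obtain x y where xy: "z = (x, y)" by (cases z)
  have "cmod (x - fst z0) \<le> real (Suc m) * \<rho>"
    using z xy unfolding pdisc_def by simp
  from exists_step_towards_centre[OF this \<rho>(1)]
  obtain x' where x': "cmod (x' - fst z0) \<le> real m * \<rho>" "cmod (x - x') \<le> \<rho>"
    by blast
  have z': "(x', y) \<in> pdisc z0 (real m * \<rho>) r" using x' z xy by (simp add: pdisc_def)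
  have "4 * hi * l1 z0 * cmod (x - x') \<le> 4 * hi * l1 z0 * \<rho>"
    using x'(2) hi l1_pos[OF z0] by (intro mult_left_mono) auto
  with \<rho>(2) have "4 * hi * l1 z0 * cmod (x - x') \<le> 1" by linarith
  from frozen_bounded_step_fst[OF z0 _ _ this] sub z' K
  show "\<forall>k1 k2. k1 + k2 \<le> N \<longrightarrow> ndrv F (\<lambda>_. l1 z0) (\<lambda>_. l2 z0) k1 k2 z \<le> 2 * (2 * hi) ^ N / lo ^ N * K"
    using xy by (auto simp: frozen_bounded_def)
qed

lemma frozen_bounded_grow_snd:
  assumes z0: "z0 \<in> D2" and \<rho>: "0 \<le> \<rho>" "4 * hi * l2 z0 * \<rho> \<le> 1"
    and sub: "pdisc z0 r (real m * \<rho>) \<subseteq> pdisc z0 (\<beta> / l1 z0) (\<beta> / l2 z0)"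
    and K: "frozen_bounded z0 (pdisc z0 r (real m * \<rho>)) K"
  shows "frozen_bounded z0 (pdisc z0 r (real (Suc m) * \<rho>)) (2 * (2 * hi) ^ N / lo ^ N * K)"
  unfolding frozen_bounded_def
proof (intro ballI)
  fix z assume z: "z \<in> pdisc z0 r (real (Suc m) * \<rho>)"
  obtain x y where xy: "z = (x, y)" by (cases z)
  have "cmod (y - snd z0) \<le> real (Suc m) * \<rho>"
    using z xy unfolding pdisc_def by simp
  from exists_step_towards_centre[OF this \<rho>(1)]
  obtain y' where y': "cmod (y' - snd z0) \<le> real m * \<rho>" "cmod (y - y') \<le> \<rho>"
    by blast
  have z': "(x, y') \<in> pdisc z0 r (real m * \<rho>)" using y' z xy by (simp add: pdisc_def)
  have "4 * hi * l2 z0 * cmod (y - y') \<le> 4 * hi * l2 z0 * \<rho>"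
    using y'(2) hi l2_pos[OF z0] by (intro mult_left_mono) auto
  with \<rho>(2) have "4 * hi * l2 z0 * cmod (y - y') \<le> 1" by linarith
  from frozen_bounded_step_snd[OF z0 _ _ this] sub z' K
  show "\<forall>k1 k2. k1 + k2 \<le> N \<longrightarrow> ndrv F (\<lambda>_. l1 z0) (\<lambda>_. l2 z0) k1 k2 z \<le> 2 * (2 * hi) ^ N / lo ^ N * K"
    using xy by (auto simp: frozen_bounded_def)
qed

lemma frozen_bounded_grid:
  assumes z0: "z0 \<in> D2" and \<rho>: "0 \<le> \<rho>1" "0 \<le> \<rho>2"
    and close: "4 * hi * l1 z0 * \<rho>1 \<le> 1" "4 * hi * l2 z0 * \<rho>2 \<le> 1"
    and cover: "real q * \<rho>1 \<le> \<beta> / l1 z0" "real q * \<rho>2 \<le> \<beta> / l2 z0"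
    and centre: "frozen_bounded z0 {z0} K" and m: "m1 \<le> q" "m2 \<le> q"
  shows "frozen_bounded z0 (pdisc z0 (real m1 * \<rho>1) (real m2 * \<rho>2)) ((2 * (2 * hi) ^ N / lo ^ N) ^ (m1 + m2) * K)"
proof -
  define B where "B = 2 * (2 * hi) ^ N / lo ^ N"
  have sub: "pdisc z0 (real m1 * \<rho>1) (real m2 * \<rho>2) \<subseteq> pdisc z0 (\<beta> / l1 z0) (\<beta> / l2 z0)"
    if "m1 \<le> q" "m2 \<le> q" for m1 m2
  proof -
    have "real m1 * \<rho>1 \<le> real q * \<rho>1" "real m2 * \<rho>2 \<le> real q * \<rho>2"
      using that \<rho> by (auto intro: mult_right_mono)
    then show ?thesis
      unfolding pdisc_def using cover by auto
  qed
  have centre_set: "pdisc z0 (real 0 * \<rho>1) (real 0 * \<rho>2) = {z0}"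
    by (auto simp: pdisc_def prod_eq_iff)
  have fst_steps: "frozen_bounded z0 (pdisc z0 (real m1 * \<rho>1) (real 0 * \<rho>2)) (B ^ (m1 + 0) * K)"
    if "m1 \<le> q" for m1
    using that
  proof (induction m1)
    case 0
    show ?case using centre unfolding centre_set by simp
  next
    case (Suc m1)
    then have m1: "m1 \<le> q" by simp
    have "frozen_bounded z0 (pdisc z0 (real (Suc m1) * \<rho>1) (real 0 * \<rho>2))
        (2 * (2 * hi) ^ N / lo ^ N * (B ^ (m1 + 0) * K))"
      by (rule frozen_bounded_grow_fst[OF z0 \<rho>(1) close(1) sub[OF m1 le0] Suc.IH[OF m1]])
    from this[folded B_def] show ?case by (simp add: mult.assoc)
  qed
  have "frozen_bounded z0 (pdisc z0 (real m1 * \<rho>1) (real m2 * \<rho>2)) (B ^ (m1 + m2) * K)"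
    using m(2)
  proof (induction m2)
    case 0
    show ?case by (rule fst_steps[OF m(1)])
  next
    case (Suc m2)
    then have m2: "m2 \<le> q" by simp
    have "frozen_bounded z0 (pdisc z0 (real m1 * \<rho>1) (real (Suc m2) * \<rho>2))
        (2 * (2 * hi) ^ N / lo ^ N * (B ^ (m1 + m2) * K))"
      by (rule frozen_bounded_grow_snd[OF z0 \<rho>(2) close(2) sub[OF m(1) m2] Suc.IH[OF m2]])
    from this[folded B_def] show ?case by (simp add: mult.assoc)
  qed
  then show ?thesis by (simp add: B_def)
qed

lemma frozen_bounded_pdisc:
  assumes z0: "z0 \<in> D2" and q: "4 * hi * \<beta> \<le> real q"
  shows "frozen_bounded z0 (pdisc z0 (\<beta> / l1 z0) (\<beta> / l2 z0))
           ((2 * (2 * hi) ^ N / lo ^ N) ^ (2 * q) * Max {ndrv F l1 l2 k1 k2 z0 | k1 k2. k1 + k2 \<le> N})"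
proof -
  define \<rho>1 where "\<rho>1 = \<beta> / (real q * l1 z0)"
  define \<rho>2 where "\<rho>2 = \<beta> / (real q * l2 z0)"
  have l0: "0 < l1 z0" "0 < l2 z0" using l1_pos l2_pos z0 by auto
  have "0 < 4 * hi * \<beta>" using hi beta by simp
  with q have q0: "0 < real q" by linarith
  have \<rho>: "0 \<le> \<rho>1" "0 \<le> \<rho>2" "real q * \<rho>1 = \<beta> / l1 z0" "real q * \<rho>2 = \<beta> / l2 z0"
    using l0 q0 beta by (auto simp: \<rho>1_def \<rho>2_def)
  have "4 * hi * l1 z0 * \<rho>1 = 4 * hi * \<beta> / real q" "4 * hi * l2 z0 * \<rho>2 = 4 * hi * \<beta> / real q"
    using l0 by (simp_all add: \<rho>1_def \<rho>2_def)
  with q q0 have close: "4 * hi * l1 z0 * \<rho>1 \<le> 1" "4 * hi * l2 z0 * \<rho>2 \<le> 1"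
    by (simp_all add: divide_le_eq)
  have centre: "frozen_bounded z0 {z0} (Max {ndrv F l1 l2 k1 k2 z0 | k1 k2. k1 + k2 \<le> N})"
    unfolding frozen_bounded_def
  proof (intro ballI allI impI)
    fix z k1 k2 assume "z \<in> {z0}" and k: "k1 + k2 \<le> N"
    then have "ndrv F (\<lambda>_. l1 z0) (\<lambda>_. l2 z0) k1 k2 z = ndrv F l1 l2 k1 k2 z0"
      by (simp add: ndrv_def)
    also have "\<dots> \<le> Max {ndrv F l1 l2 k1 k2 z0 | k1 k2. k1 + k2 \<le> N}"
      by (rule le_Max_pairs_sum_le[OF k])
    finally show "ndrv F (\<lambda>_. l1 z0) (\<lambda>_. l2 z0) k1 k2 z \<le> Max {ndrv F l1 l2 k1 k2 z0 | k1 k2. k1 + k2 \<le> N}" .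
  qed
  have "frozen_bounded z0 (pdisc z0 (real q * \<rho>1) (real q * \<rho>2))
      ((2 * (2 * hi) ^ N / lo ^ N) ^ (q + q) * Max {ndrv F l1 l2 k1 k2 z0 | k1 k2. k1 + k2 \<le> N})"
    by (rule frozen_bounded_grid[OF z0 \<rho>(1,2) close _ _ centre order_refl order_refl])
      (use \<rho>(3,4) in simp_all)
  then show ?thesis
    by (simp only: \<rho>(3,4) mult_2[of q, symmetric])
qed

lemma dominating_derivative:
  assumes z0: "z0 \<in> D2" and q: "4 * hi * \<beta> \<le> real q" and r: "r1 \<le> \<beta>" "r2 \<le> \<beta>"
  shows "\<exists>k1 k2. k1 + k2 \<le> N \<and> (\<forall>z\<in>pdisc z0 (r1 / l1 z0) (r2 / l2 z0).
           cmod (pderiv2 F k1 k2 z) \<le> (2 * (2 * hi) ^ N / lo ^ N) ^ (2 * q) * cmod (pderiv2 F k1 k2 z0))"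
proof -
  define S where "S = {ndrv F l1 l2 k1 k2 z0 | k1 k2. k1 + k2 \<le> N}"
  define p where "p = (2 * (2 * hi) ^ N / lo ^ N) ^ (2 * q)"
  have l0: "0 < l1 z0" "0 < l2 z0" using l1_pos l2_pos z0 by auto
  have "ndrv F l1 l2 0 0 z0 \<in> S"
    unfolding S_def by (rule CollectI, rule exI[of _ 0], rule exI[of _ 0]) simp
  then have "Max S \<in> S" unfolding S_def by (intro Max_in finite_pairs_sum_le) auto
  then obtain k1 k2 where k: "k1 + k2 \<le> N" and max: "Max S = ndrv F l1 l2 k1 k2 z0"
    unfolding S_def by blast
  have "cmod (pderiv2 F k1 k2 z) \<le> p * cmod (pderiv2 F k1 k2 z0)"
    if z: "z \<in> pdisc z0 (r1 / l1 z0) (r2 / l2 z0)" for z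
  proof -
    have "r1 / l1 z0 \<le> \<beta> / l1 z0" "r2 / l2 z0 \<le> \<beta> / l2 z0"
      using r l0 by (simp_all add: divide_right_mono)
    with z have "z \<in> pdisc z0 (\<beta> / l1 z0) (\<beta> / l2 z0)"
      by (auto simp: pdisc_def)
    with frozen_bounded_pdisc[OF z0 q] k
    have "ndrv F (\<lambda>_. l1 z0) (\<lambda>_. l2 z0) k1 k2 z \<le> p * ndrv F l1 l2 k1 k2 z0"
      unfolding frozen_bounded_def p_def S_def[symmetric] max by blast
    then have "cmod (pderiv2 F k1 k2 z) / (fact k1 * fact k2 * l1 z0 ^ k1 * l2 z0 ^ k2)
        \<le> p * cmod (pderiv2 F k1 k2 z0) / (fact k1 * fact k2 * l1 z0 ^ k1 * l2 z0 ^ k2)"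
      by (simp add: ndrv_def)
    moreover have "0 < fact k1 * fact k2 * l1 z0 ^ k1 * l2 z0 ^ k2"
      using l0 by simp
    ultimately show ?thesis
      by (simp add: divide_le_cancel)
  qed
  with k show ?thesis unfolding p_def by blast
qed

end

lemma Q2_ratio_bounds:
  assumes LQ: "Q2 \<beta> l1 l2" and \<beta>: "0 \<le> \<beta>"
    and l_pos: "\<And>z. z \<in> D2 \<Longrightarrow> 0 < l1 z \<and> 0 < l2 z"
  obtains lo hi where "0 < lo" "lo \<le> 1" "1 \<le> hi"
    and "\<And>z0 z. z0 \<in> D2 \<Longrightarrow> z \<in> D2 \<Longrightarrow> z \<in> pdisc z0 (\<beta> / l1 z0) (\<beta> / l2 z0) \<Longrightarrow>
           lo * l1 z0 \<le> l1 z \<and> l1 z \<le> hi * l1 z0 \<and> lo * l2 z0 \<le> l2 z \<and> l2 z \<le> hi * l2 z0"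
proof -
  have Q: "\<forall>l\<in>{l1, l2}. 0 < Inf (ratio_set l1 l2 l \<beta> \<beta>) \<and> bdd_above (ratio_set l1 l2 l \<beta> \<beta>)"
    using LQ[unfolded Q2_def, THEN spec, THEN spec, of \<beta> \<beta>] \<beta> by simp
  have l1_pos: "\<And>z. z \<in> D2 \<Longrightarrow> 0 < l1 z" and l2_pos: "\<And>z. z \<in> D2 \<Longrightarrow> 0 < l2 z"
    using l_pos by simp_all
  obtain lo1 hi1 where 1: "0 < lo1" "lo1 \<le> 1" "1 \<le> hi1"
    and r1: "\<And>z0 z. z0 \<in> D2 \<Longrightarrow> z \<in> D2 \<Longrightarrow> z \<in> pdisc z0 (\<beta> / l1 z0) (\<beta> / l2 z0) \<Longrightarrow>
           lo1 * l1 z0 \<le> l1 z \<and> l1 z \<le> hi1 * l1 z0"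
    by (rule ratio_set_bounds[of l1 l2 l1 \<beta> \<beta>, OF _ _ l1_pos]) (use Q in simp_all)
  obtain lo2 hi2 where 2: "0 < lo2" "lo2 \<le> 1" "1 \<le> hi2"
    and r2: "\<And>z0 z. z0 \<in> D2 \<Longrightarrow> z \<in> D2 \<Longrightarrow> z \<in> pdisc z0 (\<beta> / l1 z0) (\<beta> / l2 z0) \<Longrightarrow>
           lo2 * l2 z0 \<le> l2 z \<and> l2 z \<le> hi2 * l2 z0"
    by (rule ratio_set_bounds[of l1 l2 l2 \<beta> \<beta>, OF _ _ l2_pos]) (use Q in simp_all)
  show ?thesis
  proof (rule that[of "min lo1 lo2" "max hi1 hi2"])
    fix z0 z assume z: "z0 \<in> D2" "z \<in> D2" "z \<in> pdisc z0 (\<beta> / l1 z0) (\<beta> / l2 z0)"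
    have "min lo1 lo2 * l1 z0 \<le> lo1 * l1 z0" "min lo1 lo2 * l2 z0 \<le> lo2 * l2 z0"
      "hi1 * l1 z0 \<le> max hi1 hi2 * l1 z0" "hi2 * l2 z0 \<le> max hi1 hi2 * l2 z0"
      using l_pos[OF z(1)] by (simp_all add: mult_right_mono)
    then show "min lo1 lo2 * l1 z0 \<le> l1 z \<and> l1 z \<le> max hi1 hi2 * l1 z0 \<and>
               min lo1 lo2 * l2 z0 \<le> l2 z \<and> l2 z \<le> max hi1 hi2 * l2 z0"
      using r1[OF z] r2[OF z] by linarith
  qed (use 1 2 in auto)
qed

lemma bounded_L_index_joint_imp_dominating_derivative:
  assumes \<beta>: "\<beta> > 1" and an: "analytic_D2 F"
    and low1: "\<forall>z\<in>D2. l1 z > \<beta> / (1 - cmod (fst z))"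
    and low2: "\<forall>z\<in>D2. l2 z > \<beta> / (1 - cmod (snd z))"
    and LQ: "Q2 \<beta> l1 l2" and BI: "bounded_L_index_joint F l1 l2"
    and r: "r1 \<le> \<beta>" "r2 \<le> \<beta>"
  shows "\<exists>n0 p. p \<ge> 1 \<and> (\<forall>z0\<in>D2. \<exists>k1 k2. k1 + k2 \<le> n0 \<and>
           (\<forall>z\<in>pdisc z0 (r1 / l1 z0) (r2 / l2 z0). cmod (pderiv2 F k1 k2 z) \<le> p * cmod (pderiv2 F k1 k2 z0)))"
proof -
  obtain N where index:
    "\<forall>z\<in>D2. \<forall>P1 P2. ndrv F l1 l2 P1 P2 z \<le> Max {ndrv F l1 l2 k1 k2 z | k1 k2. k1 + k2 \<le> N}"
    using BI unfolding bounded_L_index_joint_def by blast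
  have \<beta>0: "0 < \<beta>" using \<beta> by simp
  have l_pos: "0 < l1 z \<and> 0 < l2 z" if "z \<in> D2" for z
  proof -
    have "cmod (fst z) < 1" "cmod (snd z) < 1" using that by (simp_all add: D2_def)
    with low1 low2 that show ?thesis
      using L_pos_and_cball_subset_ball(1)[OF _ \<beta>0] by simp
  qed
  obtain lo hi where lo: "0 < lo" "lo \<le> 1" and hi: "1 \<le> hi"
    and ratio: "\<And>z0 z. z0 \<in> D2 \<Longrightarrow> z \<in> D2 \<Longrightarrow> z \<in> pdisc z0 (\<beta> / l1 z0) (\<beta> / l2 z0) \<Longrightarrow>
           lo * l1 z0 \<le> l1 z \<and> l1 z \<le> hi * l1 z0 \<and> lo * l2 z0 \<le> l2 z \<and> l2 z \<le> hi * l2 z0"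
    using Q2_ratio_bounds[OF LQ less_imp_le[OF \<beta>0] l_pos] by blast
  interpret joint_index_propagation \<beta> l1 l2 F N lo hi
  proof
    show "\<forall>z\<in>D2. \<beta> / (1 - cmod (fst z)) < l1 z" "\<forall>z\<in>D2. \<beta> / (1 - cmod (snd z)) < l2 z"
      using low1 low2 by simp_all
  qed (fact \<beta> an index lo hi ratio)+
  define q where "q = nat \<lceil>4 * hi * \<beta>\<rceil>"
  have q: "4 * hi * \<beta> \<le> real q" unfolding q_def by linarith
  have "1 \<le> (2 * hi) ^ N" by (rule one_le_power) (use hi in simp)
  moreover have "lo ^ N \<le> 1" "0 < lo ^ N" using lo by (simp_all add: power_le_one)
  ultimately have "1 \<le> (2 * hi) ^ N / lo ^ N"
    by (subst le_divide_eq_1_pos) linarith+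
  then have "1 \<le> (2 * (2 * hi) ^ N / lo ^ N) ^ (2 * q)"
    unfolding times_divide_eq_right[symmetric] by (intro one_le_power) linarith
  with dominating_derivative[OF _ q r] show ?thesis by blast
qed

theorem theorem2:
  fixes \<beta> :: real and l1 l2 :: "complex \<times> complex \<Rightarrow> real"
    and F :: "complex \<times> complex \<Rightarrow> complex"
  assumes beta: "\<beta> > 1"
    and cont1: "continuous_on D2 l1" and cont2: "continuous_on D2 l2"
    and low1: "\<forall>z\<in>D2. l1 z > \<beta> / (1 - cmod (fst z))"
    and low2: "\<forall>z\<in>D2. l2 z > \<beta> / (1 - cmod (snd z))"
    and LQ: "Q2 \<beta> l1 l2"
    and an: "analytic_D2 F"
  shows
   "(bounded_L_index_joint F l1 l2 \<longrightarrow>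
      (\<forall>r1 r2. 0 < r1 \<and> r1 \<le> \<beta> \<and> 0 < r2 \<and> r2 \<le> \<beta> \<longrightarrow>
        (\<exists>n0::nat. \<exists>p::real. p \<ge> 1 \<and>
          (\<forall>z0\<in>D2. \<exists>k1 k2::nat. k1 + k2 \<le> n0 \<and>
             (\<forall>z\<in>pdisc z0 (r1 / l1 z0) (r2 / l2 z0).
                cmod (pderiv2 F k1 k2 z) \<le> p * cmod (pderiv2 F k1 k2 z0))))))
    \<and>
    ((\<forall>r1 r2. 0 < r1 \<and> r1 \<le> \<beta> \<and> 0 < r2 \<and> r2 \<le> \<beta> \<longrightarrow>
        (\<exists>n0::nat. \<exists>p::real. p \<ge> 1 \<and>
          (\<forall>z0\<in>D2. \<exists>k1 k2::nat. k1 \<le> n0 \<and> k2 \<le> n0 \<and>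
             (\<forall>z\<in>pdisc z0 (r1 / l1 z0) (r2 / l2 z0).
                cmod (pderiv2 F k1 0 z) \<le> p * cmod (pderiv2 F k1 0 z0)) \<and>
             (\<forall>z\<in>pdisc z0 (r1 / l1 z0) (r2 / l2 z0).
                cmod (pderiv2 F 0 k2 z) \<le> p * cmod (pderiv2 F 0 k2 z0)))))
     \<longrightarrow> bounded_L_index_joint F l1 l2)"
  apply (intro conjI impI allI)
  subgoal for r1 r2
    by (rule bounded_L_index_joint_imp_dominating_derivative[OF beta an low1 low2 LQ]) simp_all
  subgoal premises dominance
    using dominance[THEN spec, THEN spec, of \<beta> \<beta>] beta
    by (intro bounded_L_index_jointI[OF beta an low1 low2]) simp
  done

end
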